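(* Let $x,y\in c_0(\mathbb{N})$ be non-negative sequences with $y\prec\prec x$. Then there exists a positive operator $V=\{a_{j,k}\}_{j,k\ge0}\in B(\ell_2(\mathbb{N}))$ such that $a_{j,j}=y_j$ for all $j\ge0$ and $\mu(V)\le\mu(x)$ pointwise.
   Context: For a non-negative sequence $x\in c_0(\mathbb{N})$, $\mu(x)$ denotes its decreasing rearrangement (equivalently, the singular value sequence of the diagonal operator with diagonal $x$). For such sequences, $y\prec\prec x$ means $\sum_{k=0}^n\mu(y)_k\le\sum_{k=0}^n\mu(x)_k$ for all $n\ge0$. For an operator $V$, $\mu(k,V)=\inf\{\|V-R\|_\infty:\mathrm{rank}(R)\le k\}$. *)

theory Defs
  imports Complex_Main
begin

definition is_l2 :: "(nat \<Rightarrow> complex) \<Rightarrow> bool" where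
  "is_l2 x \<longleftrightarrow> summable (\<lambda>n. (cmod (x n))\<^sup>2)"

definition l2norm :: "(nat \<Rightarrow> complex) \<Rightarrow> real" where
  "l2norm x = sqrt (\<Sum>n. (cmod (x n))\<^sup>2)"

definition l2inner :: "(nat \<Rightarrow> complex) \<Rightarrow> (nat \<Rightarrow> complex) \<Rightarrow> complex" where
  "l2inner x y = (\<Sum>n. x n * cnj (y n))"

definition basis_vec :: "nat \<Rightarrow> nat \<Rightarrow> complex" where
  "basis_vec k = (\<lambda>n. if n = k then 1 else 0)"

text \<open>Bounded linear operators on ell_2(N); only their action on ell_2 matters.\<close>
definition is_bdd_op :: "((nat \<Rightarrow> complex) \<Rightarrow> (nat \<Rightarrow> complex)) \<Rightarrow> bool" where
  "is_bdd_op T \<longleftrightarrow>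
     (\<forall>x. is_l2 x \<longrightarrow> is_l2 (T x)) \<and>
     (\<forall>x y c. is_l2 x \<longrightarrow> is_l2 y \<longrightarrow>
        T (\<lambda>n. x n + c * y n) = (\<lambda>n. T x n + c * T y n)) \<and>
     (\<exists>C. \<forall>x. is_l2 x \<longrightarrow> l2norm (T x) \<le> C * l2norm x)"

definition positive_op :: "((nat \<Rightarrow> complex) \<Rightarrow> (nat \<Rightarrow> complex)) \<Rightarrow> bool" where
  "positive_op T \<longleftrightarrow>
     (\<forall>x. is_l2 x \<longrightarrow> Im (l2inner (T x) x) = 0 \<and> 0 \<le> Re (l2inner (T x) x))"

text \<open>Matrix entry a_{j,k} = <T e_k, e_j> = (T e_k)_j.\<close>
definition op_entry :: "((nat \<Rightarrow> complex) \<Rightarrow> (nat \<Rightarrow> complex)) \<Rightarrow> nat \<Rightarrow> nat \<Rightarrow> complex" where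
  "op_entry T j k = T (basis_vec k) j"

definition op_norm :: "((nat \<Rightarrow> complex) \<Rightarrow> (nat \<Rightarrow> complex)) \<Rightarrow> real" where
  "op_norm T = Sup {l2norm (T x) | x. is_l2 x \<and> l2norm x \<le> 1}"

definition rank_le :: "((nat \<Rightarrow> complex) \<Rightarrow> (nat \<Rightarrow> complex)) \<Rightarrow> nat \<Rightarrow> bool" where
  "rank_le R k \<longleftrightarrow> (\<exists>u :: nat \<Rightarrow> nat \<Rightarrow> complex.
      (\<forall>i<k. is_l2 (u i)) \<and>
      (\<forall>x. is_l2 x \<longrightarrow> (\<exists>c :: nat \<Rightarrow> complex. R x = (\<lambda>n. \<Sum>i<k. c i * u i n))))"

definition sing_val :: "nat \<Rightarrow> ((nat \<Rightarrow> complex) \<Rightarrow> (nat \<Rightarrow> complex)) \<Rightarrow> real" where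
  "sing_val k V = Inf {op_norm (\<lambda>x n. V x n - R x n) | R. is_bdd_op R \<and> rank_le R k}"

definition drearr :: "(nat \<Rightarrow> real) \<Rightarrow> nat \<Rightarrow> real" where
  "drearr x n = Inf {t. 0 \<le> t \<and> finite {k. x k > t} \<and> card {k. x k > t} \<le> n}"

definition submaj :: "(nat \<Rightarrow> real) \<Rightarrow> (nat \<Rightarrow> real) \<Rightarrow> bool" where
  "submaj y x \<longleftrightarrow> (\<forall>n. (\<Sum>k\<le>n. drearr y k) \<le> (\<Sum>k\<le>n. drearr x k))"

end

theory Submission
  imports Defs "HOL-Analysis.Convex" "HOL-Analysis.L2_Norm" "HOL-Analysis.Elementary_Normed_Spaces"
begin

text \<open>Let \<open>a = \<mu>(x)\<close> and let \<open>b\<close> list the values of \<open>y\<close> in decreasing order. We build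
  orthonormal real vectors \<open>c\<^sub>0, c\<^sub>1, \<dots>\<close> with \<open>\<Sum>\<^sub>p a\<^sub>p c\<^sub>j(p)\<^sup>2 = b\<^sub>j\<close>
  greedily: a residual unit vector \<open>f\<close>, of weight \<open>w = \<Sum>\<^sub>p a\<^sub>p f(p)\<^sup>2\<close>, is rotated
  against an unused basis vector \<open>e\<^sub>q\<close> whose weight \<open>a\<^sub>q\<close> lies on the other side of
  \<open>b\<^sub>j\<close> than \<open>w\<close>; one of the two rotated vectors is \<open>c\<^sub>j\<close>, the other is the new residual.
  Submajorization is exactly what keeps a suitable \<open>q\<close> available at every step. Placing
  \<open>c\<^sub>j\<close> as the row of a matrix \<open>G\<close> at the position of \<open>b\<^sub>j\<close> in \<open>y\<close>, the adjoint
  \<open>G\<^sup>*\<close> is a contraction and \<open>V = G diag(a) G\<^sup>*\<close> is positive with diagonal \<open>y\<close>; replacing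
  \<open>diag(a)\<close> by its rank-\<open>k\<close> truncation moves \<open>V\<close> by at most \<open>a\<^sub>k\<close>.\<close>

lemma is_l2_Re: "is_l2 x \<Longrightarrow> summable (\<lambda>n. (Re (x n))\<^sup>2)"
  unfolding is_l2_def
  by (rule summable_comparison_test'[where g="\<lambda>n. (cmod (x n))\<^sup>2"]) (auto simp: cmod_power2)

lemma is_l2_Im: "is_l2 x \<Longrightarrow> summable (\<lambda>n. (Im (x n))\<^sup>2)"
  unfolding is_l2_def
  by (rule summable_comparison_test'[where g="\<lambda>n. (cmod (x n))\<^sup>2"]) (auto simp: cmod_power2)

lemma suminf_cmod_sq_Re_Im:
  "is_l2 x \<Longrightarrow> (\<Sum>n. (cmod (x n))\<^sup>2) = (\<Sum>n. (Re (x n))\<^sup>2) + (\<Sum>n. (Im (x n))\<^sup>2)"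
  by (simp add: cmod_power2 suminf_add is_l2_Re is_l2_Im)

lemma is_l2_zero: "is_l2 (\<lambda>n. 0)"
  unfolding is_l2_def by simp

lemma l2norm_zero: "l2norm (\<lambda>n. 0) = 0"
  unfolding l2norm_def by simp

lemma l2norm_nonneg: "is_l2 x \<Longrightarrow> 0 \<le> l2norm x"
  unfolding l2norm_def is_l2_def by (simp add: suminf_nonneg)

lemma is_l2_add_scaled:
  assumes x: "is_l2 x" and y: "is_l2 y"
  shows "is_l2 (\<lambda>n. x n + c * y n)"
proof -
  have bound: "(cmod (x n + c * y n))\<^sup>2 \<le> 2 * (cmod (x n))\<^sup>2 + 2 * (cmod c)\<^sup>2 * (cmod (y n))\<^sup>2" for n
  proof -
    have "cmod (x n + c * y n) \<le> cmod (x n) + cmod c * cmod (y n)"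
      by (metis norm_mult norm_triangle_ineq)
    then have "(cmod (x n + c * y n))\<^sup>2 \<le> (cmod (x n) + cmod c * cmod (y n))\<^sup>2"
      by (intro power_mono) auto
    also have "\<dots> \<le> 2 * (cmod (x n))\<^sup>2 + 2 * (cmod c)\<^sup>2 * (cmod (y n))\<^sup>2"
      using sum_squares_bound[of "cmod (x n)" "cmod c * cmod (y n)"]
      by (simp add: power2_eq_square algebra_simps)
    finally show ?thesis .
  qed
  have "summable (\<lambda>n. 2 * (cmod (x n))\<^sup>2 + 2 * (cmod c)\<^sup>2 * (cmod (y n))\<^sup>2)"
    using x y unfolding is_l2_def by (intro summable_add summable_mult) auto
  then show ?thesis unfolding is_l2_def
    by (rule summable_comparison_test'[where N=0]) (use bound in auto)
qed

lemma is_l2_restrict: "is_l2 x \<Longrightarrow> is_l2 (\<lambda>n. if P n then x n else 0)"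
  unfolding is_l2_def by (rule summable_comparison_test'[where N=0]) auto

lemma is_l2_scale_real:
  assumes z: "is_l2 z" and lam: "\<And>p. \<bar>lam p\<bar> \<le> M"
  shows "is_l2 (\<lambda>p. complex_of_real (lam p) * z p)"
    "(\<Sum>p. (cmod (complex_of_real (lam p) * z p))\<^sup>2) \<le> M\<^sup>2 * (\<Sum>p. (cmod (z p))\<^sup>2)"
proof -
  have le: "(cmod (complex_of_real (lam p) * z p))\<^sup>2 \<le> M\<^sup>2 * (cmod (z p))\<^sup>2" for p
  proof -
    have "\<bar>lam p\<bar>\<^sup>2 \<le> M\<^sup>2" using lam[of p] by (intro power_mono) auto
    then show ?thesis by (simp add: norm_mult power_mult_distrib mult_right_mono)
  qed
  have s: "summable (\<lambda>p. M\<^sup>2 * (cmod (z p))\<^sup>2)"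
    using z unfolding is_l2_def by (intro summable_mult)
  show l2: "is_l2 (\<lambda>p. complex_of_real (lam p) * z p)" unfolding is_l2_def
    by (rule summable_comparison_test'[where N=0, OF s]) (use le in auto)
  show "(\<Sum>p. (cmod (complex_of_real (lam p) * z p))\<^sup>2) \<le> M\<^sup>2 * (\<Sum>p. (cmod (z p))\<^sup>2)"
    using suminf_le[OF le _ s] suminf_mult[of "\<lambda>p. (cmod (z p))\<^sup>2" "M\<^sup>2"] l2 z
    unfolding is_l2_def by auto
qed

lemma l2norm_diff_le:
  assumes a: "is_l2 a" and b: "is_l2 b"
  shows "l2norm (\<lambda>n. a n - b n) \<le> l2norm a + l2norm b"
proof -
  have partial: "(\<Sum>p<P. (cmod (a p - b p))\<^sup>2) \<le> (l2norm a + l2norm b)\<^sup>2" for P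
  proof -
    have "L2_set (\<lambda>p. cmod (a p - b p)) {..<P} \<le> L2_set (\<lambda>p. cmod (a p) + cmod (b p)) {..<P}"
      by (rule L2_set_mono) (auto intro: norm_triangle_ineq4)
    also have "\<dots> \<le> L2_set (\<lambda>p. cmod (a p)) {..<P} + L2_set (\<lambda>p. cmod (b p)) {..<P}"
      by (rule L2_set_triangle_ineq)
    also have "L2_set (\<lambda>p. cmod (a p)) {..<P} \<le> l2norm a"
      unfolding L2_set_def l2norm_def using a unfolding is_l2_def
      by (intro real_sqrt_le_mono sum_le_suminf) auto
    also have "L2_set (\<lambda>p. cmod (b p)) {..<P} \<le> l2norm b"
      unfolding L2_set_def l2norm_def using b unfolding is_l2_def
      by (intro real_sqrt_le_mono sum_le_suminf) auto
    finally have "sqrt (\<Sum>p<P. (cmod (a p - b p))\<^sup>2) \<le> l2norm a + l2norm b"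
      unfolding L2_set_def by simp
    moreover have "0 \<le> (\<Sum>p<P. (cmod (a p - b p))\<^sup>2)" by (simp add: sum_nonneg)
    ultimately show ?thesis by (metis real_le_rsqrt real_sqrt_le_iff sqrt_le_D)
  qed
  have "summable (\<lambda>p. (cmod (a p - b p))\<^sup>2)"
    by (rule summableI_nonneg_bounded) (auto intro: partial)
  then have "(\<Sum>p. (cmod (a p - b p))\<^sup>2) \<le> (l2norm a + l2norm b)\<^sup>2"
    by (rule suminf_le_const[OF _ partial])
  then have "l2norm (\<lambda>n. a n - b n) \<le> sqrt ((l2norm a + l2norm b)\<^sup>2)"
    unfolding l2norm_def by (rule real_sqrt_le_mono)
  also have "\<dots> = l2norm a + l2norm b"
    using l2norm_nonneg[OF a] l2norm_nonneg[OF b] by simp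
  finally show ?thesis .
qed

lemma summable_norm_mult_l2:
  assumes a: "is_l2 a" and b: "is_l2 b"
  shows "summable (\<lambda>p. cmod (a p) * cmod (b p))"
    "(\<Sum>p. cmod (a p) * cmod (b p)) \<le> l2norm a * l2norm b"
proof -
  have partial: "(\<Sum>p<P. cmod (a p) * cmod (b p)) \<le> l2norm a * l2norm b" for P
  proof -
    have "(\<Sum>p<P. cmod (a p) * cmod (b p))\<^sup>2 \<le> (\<Sum>p<P. (cmod (a p))\<^sup>2) * (\<Sum>p<P. (cmod (b p))\<^sup>2)"
      by (rule Cauchy_Schwarz_ineq_sum)
    also have "\<dots> \<le> (\<Sum>p. (cmod (a p))\<^sup>2) * (\<Sum>p. (cmod (b p))\<^sup>2)"
      using a b unfolding is_l2_def
      by (intro mult_mono sum_le_suminf suminf_nonneg sum_nonneg) auto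
    finally have "(\<Sum>p<P. cmod (a p) * cmod (b p)) \<le> sqrt ((\<Sum>p. (cmod (a p))\<^sup>2) * (\<Sum>p. (cmod (b p))\<^sup>2))"
      by (simp add: real_le_rsqrt)
    then show ?thesis unfolding l2norm_def by (simp add: real_sqrt_mult)
  qed
  show s: "summable (\<lambda>p. cmod (a p) * cmod (b p))"
    by (rule summableI_nonneg_bounded) (auto intro: partial)
  show "(\<Sum>p. cmod (a p) * cmod (b p)) \<le> l2norm a * l2norm b"
    by (rule suminf_le_const[OF s partial])
qed

lemma summable_l2_inner:
  assumes "is_l2 a" "is_l2 b"
  shows "summable (\<lambda>p. a p * cnj (b p))"
  by (rule summable_norm_cancel, rule summable_comparison_test'[OF summable_norm_mult_l2(1)[OF assms], where N=0])
     (simp add: norm_mult)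

lemma norm_l2_inner_le:
  assumes a: "is_l2 a" and b: "is_l2 b"
  shows "cmod (\<Sum>p. a p * cnj (b p)) \<le> l2norm a * l2norm b"
proof -
  have s: "summable (\<lambda>p. norm (a p * cnj (b p)))"
    using summable_norm_mult_l2(1)[OF a b] by (simp add: norm_mult)
  have "cmod (\<Sum>p. a p * cnj (b p)) \<le> (\<Sum>p. norm (a p * cnj (b p)))"
    by (rule summable_norm[OF s])
  also have "\<dots> \<le> l2norm a * l2norm b"
    using summable_norm_mult_l2(2)[OF a b] by (simp add: norm_mult)
  finally show ?thesis .
qed

lemma l2_tail_tendsto_zero:
  assumes x: "is_l2 x"
  shows "(\<lambda>N. \<Sum>n. (cmod (if N \<le> n then x n else 0))\<^sup>2) \<longlonglongrightarrow> 0"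
proof -
  have s: "summable (\<lambda>n. (cmod (x n))\<^sup>2)" using x unfolding is_l2_def .
  have tail: "(\<Sum>n. (cmod (if N \<le> n then x n else 0))\<^sup>2) = (\<Sum>n. (cmod (x n))\<^sup>2) - (\<Sum>n<N. (cmod (x n))\<^sup>2)" for N
  proof -
    have "(\<lambda>n. (cmod (if N \<le> n then x n else 0))\<^sup>2) = (\<lambda>n. (cmod (x n))\<^sup>2 - (if n < N then (cmod (x n))\<^sup>2 else 0))"
      by (auto simp: fun_eq_iff)
    moreover have "(\<Sum>n. (if n < N then (cmod (x n))\<^sup>2 else 0)) = (\<Sum>n<N. (cmod (x n))\<^sup>2)"
      by (subst suminf_finite[of "{..<N}"]) auto
    moreover have "summable (\<lambda>n. (if n < N then (cmod (x n))\<^sup>2 else 0))"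
      by (rule summable_finite[of "{..<N}"]) auto
    ultimately show ?thesis using suminf_diff[OF s, of "\<lambda>n. (if n < N then (cmod (x n))\<^sup>2 else 0)"] by simp
  qed
  have "(\<lambda>N. (\<Sum>n. (cmod (x n))\<^sup>2) - (\<Sum>n<N. (cmod (x n))\<^sup>2)) \<longlonglongrightarrow> (\<Sum>n. (cmod (x n))\<^sup>2) - (\<Sum>n. (cmod (x n))\<^sup>2)"
    by (intro tendsto_diff tendsto_const summable_LIMSEQ s)
  then show ?thesis unfolding tail by simp
qed

lemma op_norm_le:
  assumes "\<And>x. is_l2 x \<Longrightarrow> l2norm x \<le> 1 \<Longrightarrow> l2norm (T x) \<le> M"
  shows "op_norm T \<le> M"
  unfolding op_norm_def
proof (rule cSup_least)
  have "l2norm (T (\<lambda>n. 0)) \<in> {l2norm (T x) |x. is_l2 x \<and> l2norm x \<le> 1}"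
    using is_l2_zero l2norm_zero by fastforce
  then show "{l2norm (T x) |x. is_l2 x \<and> l2norm x \<le> 1} \<noteq> {}" by blast
qed (use assms in auto)

lemma is_bdd_op_unit_ball_bound:
  assumes "is_bdd_op V"
  obtains C where "\<And>x. is_l2 x \<Longrightarrow> l2norm x \<le> 1 \<Longrightarrow> l2norm (V x) \<le> C"
proof -
  obtain C where C: "\<And>x. is_l2 x \<Longrightarrow> l2norm (V x) \<le> C * l2norm x"
    using assms unfolding is_bdd_op_def by blast
  have "l2norm (V x) \<le> \<bar>C\<bar>" if "is_l2 x" "l2norm x \<le> 1" for x
  proof -
    have "l2norm (V x) \<le> \<bar>C\<bar> * l2norm x"
      using C[OF that(1)] mult_right_mono[OF abs_ge_self[of C] l2norm_nonneg[OF that(1)]] by linarith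
    also have "\<dots> \<le> \<bar>C\<bar>" using that l2norm_nonneg[OF that(1)] by (simp add: mult_left_le)
    finally show ?thesis .
  qed
  then show ?thesis using that by blast
qed

lemma op_norm_diff_nonneg:
  assumes V: "is_bdd_op V" and R: "is_bdd_op R"
  shows "0 \<le> op_norm (\<lambda>x n. V x n - R x n)"
proof -
  obtain C1 where C1: "\<And>x. is_l2 x \<Longrightarrow> l2norm x \<le> 1 \<Longrightarrow> l2norm (V x) \<le> C1"
    using is_bdd_op_unit_ball_bound[OF V] by blast
  obtain C2 where C2: "\<And>x. is_l2 x \<Longrightarrow> l2norm x \<le> 1 \<Longrightarrow> l2norm (R x) \<le> C2"
    using is_bdd_op_unit_ball_bound[OF R] by blast
  have l2: "is_l2 (V x)" "is_l2 (R x)" if "is_l2 x" for x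
    using V R that unfolding is_bdd_op_def by blast+
  let ?S = "{l2norm ((\<lambda>x n. V x n - R x n) x) |x. is_l2 x \<and> l2norm x \<le> 1}"
  have "bdd_above ?S"
  proof (rule bdd_aboveI)
    fix t assume "t \<in> ?S"
    then obtain x where x: "is_l2 x" "l2norm x \<le> 1" and t: "t = l2norm (\<lambda>n. V x n - R x n)"
      by auto
    have "t \<le> l2norm (V x) + l2norm (R x)" unfolding t by (rule l2norm_diff_le[OF l2[OF x(1)]])
    also have "\<dots> \<le> C1 + C2" using C1[OF x] C2[OF x] by simp
    finally show "t \<le> C1 + C2" .
  qed
  moreover have "l2norm (\<lambda>n. V (\<lambda>n. 0) n - R (\<lambda>n. 0) n) \<in> ?S"
    using is_l2_zero l2norm_zero by fastforce
  moreover have "0 \<le> l2norm (\<lambda>n. V (\<lambda>n. 0) n - R (\<lambda>n. 0) n)"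
    using l2norm_nonneg is_l2_add_scaled[OF l2[OF is_l2_zero], of "-1"] by simp
  ultimately show ?thesis unfolding op_norm_def by (meson cSup_upper order_trans)
qed

lemma sing_val_le_approx:
  assumes V: "is_bdd_op V" and R: "is_bdd_op R" "rank_le R k"
    and approx: "\<And>x. is_l2 x \<Longrightarrow> l2norm x \<le> 1 \<Longrightarrow> l2norm (\<lambda>n. V x n - R x n) \<le> M"
  shows "sing_val k V \<le> M"
proof -
  let ?X = "{op_norm (\<lambda>x n. V x n - R x n) | R. is_bdd_op R \<and> rank_le R k}"
  have "bdd_below ?X"
    using op_norm_diff_nonneg[OF V] by (auto intro!: bdd_belowI[of _ 0])
  moreover have "op_norm (\<lambda>x n. V x n - R x n) \<in> ?X" using R by blast
  ultimately have "sing_val k V \<le> op_norm (\<lambda>x n. V x n - R x n)"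
    unfolding sing_val_def by (rule cInf_lower[rotated])
  also have "\<dots> \<le> M" by (rule op_norm_le) (use approx in simp)
  finally show ?thesis .
qed

section \<open>Compressions of diagonal operators\<close>

text \<open>\<open>g n\<close> is the \<open>n\<close>-th row of a real matrix \<open>G\<close>; \<open>adj_apply\<close>, \<open>mat_apply\<close> and
  \<open>sandwich \<lambda>\<close> below are \<open>G\<^sup>*\<close>, \<open>G\<close> and \<open>G diag(\<lambda>) G\<^sup>*\<close>.\<close>

locale row_contraction =
  fixes g :: "nat \<Rightarrow> nat \<Rightarrow> real" and sb :: "nat \<Rightarrow> nat"
  assumes row_support: "\<And>n p. sb n \<le> p \<Longrightarrow> g n p = 0"
    and adj_contraction:
      "\<And>N c M. finite N \<Longrightarrow> (\<Sum>p<M. (\<Sum>n\<in>N. c n * g n p)\<^sup>2) \<le> (\<Sum>n\<in>N. (c n)\<^sup>2)"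
begin

lemma col_sum_sq_le_one:
  assumes "finite N"
  shows "(\<Sum>n\<in>N. (g n p)\<^sup>2) \<le> 1"
proof -
  define s where "s = (\<Sum>n\<in>N. (g n p)\<^sup>2)"
  have "(\<Sum>n\<in>N. g n p * g n p)\<^sup>2 \<le> (\<Sum>p'<Suc p. (\<Sum>n\<in>N. g n p * g n p')\<^sup>2)"
    by (rule member_le_sum) auto
  also have "\<dots> \<le> s" unfolding s_def using adj_contraction[OF assms, of "\<lambda>n. g n p" "Suc p"] by simp
  finally have "s\<^sup>2 \<le> s" unfolding s_def by (simp add: power2_eq_square)
  moreover have "0 \<le> s" unfolding s_def by (simp add: sum_nonneg)
  ultimately show ?thesis unfolding s_def[symmetric]
    by (cases "s = 0") (auto simp: power2_eq_square)
qed

lemma summable_col_sq: "summable (\<lambda>n. (g n p)\<^sup>2)"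
  by (rule summableI_nonneg_bounded[where x=1]) (auto intro: col_sum_sq_le_one)

lemma is_l2_col: "is_l2 (\<lambda>n. complex_of_real (g n p))"
  unfolding is_l2_def using summable_col_sq by simp

definition adj_apply :: "(nat \<Rightarrow> complex) \<Rightarrow> nat \<Rightarrow> complex" where
  "adj_apply x p = (\<Sum>n. x n * complex_of_real (g n p))"

definition mat_apply :: "(nat \<Rightarrow> complex) \<Rightarrow> nat \<Rightarrow> complex" where
  "mat_apply z n = (\<Sum>p<sb n. z p * complex_of_real (g n p))"

definition sandwich :: "(nat \<Rightarrow> real) \<Rightarrow> (nat \<Rightarrow> complex) \<Rightarrow> nat \<Rightarrow> complex" where
  "sandwich lam x = mat_apply (\<lambda>p. complex_of_real (lam p) * adj_apply x p)"

lemma summable_adj_apply: "is_l2 x \<Longrightarrow> summable (\<lambda>n. x n * complex_of_real (g n p))"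
proof -
  assume x: "is_l2 x"
  have "summable (\<lambda>n. ((cmod (x n))\<^sup>2 + (g n p)\<^sup>2) / 2)"
    using x summable_col_sq unfolding is_l2_def by (intro summable_divide summable_add) auto
  moreover have "norm (x n * complex_of_real (g n p)) \<le> ((cmod (x n))\<^sup>2 + (g n p)\<^sup>2) / 2" for n
    using sum_squares_bound[of "cmod (x n)" "\<bar>g n p\<bar>"] by (simp add: norm_mult)
  ultimately show ?thesis by (rule summable_comparison_test'[where N=0])
qed

lemma adj_apply_add_scaled:
  assumes x: "is_l2 x" and y: "is_l2 y"
  shows "adj_apply (\<lambda>n. x n + c * y n) p = adj_apply x p + c * adj_apply y p"
proof -
  have "adj_apply (\<lambda>n. x n + c * y n) p
      = (\<Sum>n. x n * complex_of_real (g n p) + c * (y n * complex_of_real (g n p)))"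
    unfolding adj_apply_def by (simp add: algebra_simps)
  also have "\<dots> = adj_apply x p + c * adj_apply y p"
    unfolding adj_apply_def
    by (subst suminf_add[symmetric])
       (auto intro: summable_adj_apply x y summable_mult simp: suminf_mult[OF summable_adj_apply[OF y]])
  finally show ?thesis .
qed

lemma adj_apply_restrict_lt:
  "adj_apply (\<lambda>n. if n < N then x n else 0) p = (\<Sum>n<N. x n * complex_of_real (g n p))"
  unfolding adj_apply_def by (subst suminf_finite[of "{..<N}"]) auto

lemma adj_apply_partial_bound:
  "(\<Sum>p<P. (cmod (\<Sum>n<N. x n * complex_of_real (g n p)))\<^sup>2) \<le> (\<Sum>n<N. (cmod (x n))\<^sup>2)"
proof -
  have "(\<Sum>p<P. (cmod (\<Sum>n<N. x n * complex_of_real (g n p)))\<^sup>2)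
     = (\<Sum>p<P. (\<Sum>n<N. Re (x n) * g n p)\<^sup>2) + (\<Sum>p<P. (\<Sum>n<N. Im (x n) * g n p)\<^sup>2)"
    by (simp add: cmod_power2 Re_sum Im_sum sum.distrib)
  also have "\<dots> \<le> (\<Sum>n<N. (Re (x n))\<^sup>2) + (\<Sum>n<N. (Im (x n))\<^sup>2)"
    by (intro add_mono adj_contraction) auto
  also have "\<dots> = (\<Sum>n<N. (cmod (x n))\<^sup>2)"
    by (simp add: cmod_power2 sum.distrib)
  finally show ?thesis .
qed

lemma adj_apply_l2:
  assumes x: "is_l2 x"
  shows "is_l2 (adj_apply x)" "(\<Sum>p. (cmod (adj_apply x p))\<^sup>2) \<le> (\<Sum>n. (cmod (x n))\<^sup>2)"
proof -
  have partial: "(\<Sum>p<P. (cmod (adj_apply x p))\<^sup>2) \<le> (\<Sum>n. (cmod (x n))\<^sup>2)" for P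
  proof -
    have lim: "(\<lambda>N. \<Sum>p<P. (cmod (\<Sum>n<N. x n * complex_of_real (g n p)))\<^sup>2)
        \<longlonglongrightarrow> (\<Sum>p<P. (cmod (adj_apply x p))\<^sup>2)"
      unfolding adj_apply_def
      by (intro tendsto_intros summable_LIMSEQ summable_adj_apply x)
    have "(\<Sum>p<P. (cmod (\<Sum>n<N. x n * complex_of_real (g n p)))\<^sup>2) \<le> (\<Sum>n. (cmod (x n))\<^sup>2)" for N
      using adj_apply_partial_bound[where P=P and N=N and x=x] sum_le_suminf[of "\<lambda>n. (cmod (x n))\<^sup>2" "{..<N}"] x
      unfolding is_l2_def by auto
    then show ?thesis by (intro LIMSEQ_le_const2[OF lim]) auto
  qed
  show "is_l2 (adj_apply x)" unfolding is_l2_def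
    by (rule summableI_nonneg_bounded) (auto intro: partial)
  then show "(\<Sum>p. (cmod (adj_apply x p))\<^sup>2) \<le> (\<Sum>n. (cmod (x n))\<^sup>2)"
    unfolding is_l2_def by (rule suminf_le_const) (rule partial)
qed

lemma mat_apply_eq_sum_upto:
  assumes "sb n \<le> K"
  shows "mat_apply z n = (\<Sum>p<K. z p * complex_of_real (g n p))"
  unfolding mat_apply_def by (rule sum.mono_neutral_left) (use assms row_support in auto)

lemma sum_sq_mat_apply_real_le:
  fixes u :: "nat \<Rightarrow> real"
  assumes u: "summable (\<lambda>p. (u p)\<^sup>2)" and N: "finite N"
  shows "(\<Sum>n\<in>N. (\<Sum>p<sb n. u p * g n p)\<^sup>2) \<le> (\<Sum>p. (u p)\<^sup>2)"
proof -
  define K where "K = (\<Sum>n\<in>N. sb n)"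
  have sb_le_K: "sb n \<le> K" if "n \<in> N" for n
    unfolding K_def by (rule member_le_sum[OF that _ N]) auto
  define d where "d n = (\<Sum>p<K. u p * g n p)" for n
  have d: "n \<in> N \<Longrightarrow> (\<Sum>p<sb n. u p * g n p) = d n" for n
    unfolding d_def by (rule sum.mono_neutral_left) (use sb_le_K row_support in auto)
  define D where "D = (\<Sum>n\<in>N. (d n)\<^sup>2)"
  define X where "X = (\<Sum>p<K. (u p)\<^sup>2)"
  have "D = (\<Sum>p<K. u p * (\<Sum>n\<in>N. d n * g n p))"
    unfolding D_def d_def
    by (simp add: power2_eq_square sum_distrib_left sum_distrib_right algebra_simps sum.swap[of _ N])
  then have "D\<^sup>2 \<le> X * (\<Sum>p<K. (\<Sum>n\<in>N. d n * g n p)\<^sup>2)"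
    unfolding X_def by (simp add: Cauchy_Schwarz_ineq_sum)
  also have "\<dots> \<le> X * D"
    unfolding D_def X_def by (intro mult_left_mono adj_contraction N sum_nonneg) auto
  finally have "D\<^sup>2 \<le> X * D" .
  moreover have "0 \<le> D" "0 \<le> X" unfolding D_def X_def by (simp_all add: sum_nonneg)
  ultimately have "D \<le> X" by (cases "D = 0") (auto simp: power2_eq_square)
  also have "X \<le> (\<Sum>p. (u p)\<^sup>2)" unfolding X_def by (rule sum_le_suminf[OF u]) auto
  finally show ?thesis unfolding D_def using d by simp
qed

lemma mat_apply_l2:
  assumes z: "is_l2 z"
  shows "is_l2 (mat_apply z)" "(\<Sum>n. (cmod (mat_apply z n))\<^sup>2) \<le> (\<Sum>p. (cmod (z p))\<^sup>2)"
proof -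
  have partial: "(\<Sum>n<N. (cmod (mat_apply z n))\<^sup>2) \<le> (\<Sum>p. (cmod (z p))\<^sup>2)" for N
  proof -
    have "(\<Sum>n<N. (cmod (mat_apply z n))\<^sup>2)
        = (\<Sum>n<N. (\<Sum>p<sb n. Re (z p) * g n p)\<^sup>2) + (\<Sum>n<N. (\<Sum>p<sb n. Im (z p) * g n p)\<^sup>2)"
      unfolding mat_apply_def by (simp add: cmod_power2 Re_sum Im_sum sum.distrib)
    also have "\<dots> \<le> (\<Sum>p. (Re (z p))\<^sup>2) + (\<Sum>p. (Im (z p))\<^sup>2)"
      by (intro add_mono sum_sq_mat_apply_real_le is_l2_Re is_l2_Im z) auto
    also have "\<dots> = (\<Sum>p. (cmod (z p))\<^sup>2)" using suminf_cmod_sq_Re_Im[OF z] by simp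
    finally show ?thesis .
  qed
  show "is_l2 (mat_apply z)" unfolding is_l2_def
    by (rule summableI_nonneg_bounded) (auto intro: partial)
  then show "(\<Sum>n. (cmod (mat_apply z n))\<^sup>2) \<le> (\<Sum>p. (cmod (z p))\<^sup>2)"
    unfolding is_l2_def by (rule suminf_le_const) (rule partial)
qed

lemma mat_apply_inner_restrict:
  assumes x: "is_l2 x"
  shows "(\<Sum>n<N. mat_apply w n * cnj (x n))
    = (\<Sum>p. w p * cnj (adj_apply (\<lambda>n. if n < N then x n else 0) p))"
proof -
  define K where "K = (\<Sum>n<N. sb n)"
  have sb_le_K: "sb n \<le> K" if "n < N" for n
    unfolding K_def by (rule member_le_sum) (use that in auto)
  have "(\<Sum>n<N. mat_apply w n * cnj (x n))
      = (\<Sum>n<N. (\<Sum>p<K. w p * complex_of_real (g n p)) * cnj (x n))"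
    by (rule sum.cong) (auto simp: mat_apply_eq_sum_upto[OF sb_le_K])
  also have "\<dots> = (\<Sum>p<K. w p * cnj (\<Sum>n<N. x n * complex_of_real (g n p)))"
    by (simp add: sum_distrib_left sum_distrib_right sum.swap[of _ "{..<N}"] algebra_simps)
  also have "\<dots> = (\<Sum>p. w p * cnj (\<Sum>n<N. x n * complex_of_real (g n p)))"
  proof (rule suminf_finite[symmetric])
    fix p assume "p \<notin> {..<K}"
    then have "g n p = 0" if "n < N" for n using row_support sb_le_K[OF that] by auto
    then show "w p * cnj (\<Sum>n<N. x n * complex_of_real (g n p)) = 0" by simp
  qed simp
  finally show ?thesis by (simp only: adj_apply_restrict_lt)
qed

lemma norm_inner_adj_apply_le:
  assumes w: "is_l2 w" and z: "is_l2 z"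
  shows "cmod (\<Sum>p. w p * cnj (adj_apply z p)) \<le> l2norm w * sqrt (\<Sum>n. (cmod (z n))\<^sup>2)"
proof -
  have "cmod (\<Sum>p. w p * cnj (adj_apply z p)) \<le> l2norm w * l2norm (adj_apply z)"
    by (rule norm_l2_inner_le[OF w adj_apply_l2(1)[OF z]])
  also have "\<dots> \<le> l2norm w * sqrt (\<Sum>n. (cmod (z n))\<^sup>2)"
    unfolding l2norm_def
    by (intro mult_left_mono real_sqrt_le_mono adj_apply_l2(2)[OF z])
       (use w in \<open>auto simp: l2norm_def is_l2_def intro: suminf_nonneg\<close>)
  finally show ?thesis .
qed

lemma inner_adj_apply_restrict_tendsto:
  assumes w: "is_l2 w" and x: "is_l2 x"
  shows "(\<lambda>N. \<Sum>p. w p * cnj (adj_apply (\<lambda>n. if n < N then x n else 0) p))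
    \<longlonglongrightarrow> (\<Sum>p. w p * cnj (adj_apply x p))"
proof -
  define head where "head N n = (if n < N then x n else 0)" for N n
  define tail where "tail N n = (if N \<le> n then x n else 0)" for N n
  have head: "is_l2 (head N)" and tail: "is_l2 (tail N)" for N
    unfolding head_def tail_def by (simp_all add: is_l2_restrict x)
  have decomp: "adj_apply x p = adj_apply (head N) p + adj_apply (tail N) p" for N p
  proof -
    have "x = (\<lambda>n. head N n + 1 * tail N n)" unfolding head_def tail_def by auto
    then show ?thesis using adj_apply_add_scaled[OF head tail, where c=1 and p=p] by simp
  qed
  have "(\<Sum>p. w p * cnj (adj_apply x p))
      = (\<Sum>p. w p * cnj (adj_apply (head N) p) + w p * cnj (adj_apply (tail N) p))" for N
    by (simp only: decomp[where N=N] complex_cnj_add distrib_left)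
  then have split: "(\<Sum>p. w p * cnj (adj_apply x p))
      = (\<Sum>p. w p * cnj (adj_apply (head N) p)) + (\<Sum>p. w p * cnj (adj_apply (tail N) p))" for N
    by (simp only: suminf_add[OF summable_l2_inner[OF w adj_apply_l2(1)[OF head]]
          summable_l2_inner[OF w adj_apply_l2(1)[OF tail]]])
  have bound: "cmod ((\<Sum>p. w p * cnj (adj_apply (head N) p)) - (\<Sum>p. w p * cnj (adj_apply x p)))
      \<le> l2norm w * sqrt (\<Sum>n. (cmod (tail N n))\<^sup>2)" for N
    using split[of N] norm_inner_adj_apply_le[OF w tail] by (simp add: norm_minus_commute)
  have "(\<lambda>N. l2norm w * sqrt (\<Sum>n. (cmod (tail N n))\<^sup>2)) \<longlonglongrightarrow> l2norm w * sqrt 0"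
    unfolding tail_def by (intro tendsto_mult tendsto_const tendsto_real_sqrt l2_tail_tendsto_zero[OF x])
  then have "(\<lambda>N. l2norm w * sqrt (\<Sum>n. (cmod (tail N n))\<^sup>2)) \<longlonglongrightarrow> 0"
    by simp
  then have "(\<lambda>N. (\<Sum>p. w p * cnj (adj_apply (head N) p)) - (\<Sum>p. w p * cnj (adj_apply x p))) \<longlonglongrightarrow> 0"
    by (rule Lim_null_comparison[rotated]) (use bound in auto)
  then show ?thesis unfolding head_def by (simp add: LIM_zero_iff)
qed

lemma mat_apply_adjoint:
  assumes w: "is_l2 w" and x: "is_l2 x"
  shows "(\<Sum>n. mat_apply w n * cnj (x n)) = (\<Sum>p. w p * cnj (adj_apply x p))"
proof (rule LIMSEQ_unique)
  show "(\<lambda>N. \<Sum>n<N. mat_apply w n * cnj (x n)) \<longlonglongrightarrow> (\<Sum>n. mat_apply w n * cnj (x n))"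
    by (rule summable_LIMSEQ[OF summable_l2_inner[OF mat_apply_l2(1)[OF w] x]])
  show "(\<lambda>N. \<Sum>n<N. mat_apply w n * cnj (x n)) \<longlonglongrightarrow> (\<Sum>p. w p * cnj (adj_apply x p))"
    unfolding mat_apply_inner_restrict[OF x] by (rule inner_adj_apply_restrict_tendsto[OF w x])
qed

lemma sandwich_l2:
  assumes x: "is_l2 x" and lam: "\<And>p. \<bar>lam p\<bar> \<le> M"
  shows "is_l2 (sandwich lam x)"
    "(\<Sum>n. (cmod (sandwich lam x n))\<^sup>2) \<le> M\<^sup>2 * (\<Sum>n. (cmod (x n))\<^sup>2)"
proof -
  note adj = adj_apply_l2[OF x]
  note scaled = is_l2_scale_real[where lam=lam and M=M, OF adj(1) lam]
  note mat = mat_apply_l2[OF scaled(1)]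
  show "is_l2 (sandwich lam x)" unfolding sandwich_def by (rule mat(1))
  have "(\<Sum>n. (cmod (sandwich lam x n))\<^sup>2) \<le> M\<^sup>2 * (\<Sum>p. (cmod (adj_apply x p))\<^sup>2)"
    unfolding sandwich_def using mat(2) scaled(2) by linarith
  also have "\<dots> \<le> M\<^sup>2 * (\<Sum>n. (cmod (x n))\<^sup>2)"
    by (rule mult_left_mono[OF adj(2)]) simp
  finally show "(\<Sum>n. (cmod (sandwich lam x n))\<^sup>2) \<le> M\<^sup>2 * (\<Sum>n. (cmod (x n))\<^sup>2)" .
qed

lemma l2norm_sandwich_le:
  assumes x: "is_l2 x" and lam: "\<And>p. \<bar>lam p\<bar> \<le> M"
  shows "l2norm (sandwich lam x) \<le> M * l2norm x"
proof -
  have "0 \<le> M" using lam[of 0] by linarith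
  have "l2norm (sandwich lam x) \<le> sqrt (M\<^sup>2 * (\<Sum>n. (cmod (x n))\<^sup>2))"
    unfolding l2norm_def by (rule real_sqrt_le_mono[OF sandwich_l2(2)[OF x lam]])
  also have "\<dots> = M * l2norm x" unfolding l2norm_def using \<open>0 \<le> M\<close> by (simp add: real_sqrt_mult)
  finally show ?thesis .
qed

lemma sandwich_add_scaled:
  assumes "is_l2 x" "is_l2 y"
  shows "sandwich lam (\<lambda>n. x n + c * y n) = (\<lambda>n. sandwich lam x n + c * sandwich lam y n)"
  unfolding sandwich_def mat_apply_def adj_apply_add_scaled[OF assms]
  by (simp add: algebra_simps sum.distrib sum_distrib_left)

lemma is_bdd_op_sandwich:
  assumes "\<And>p. \<bar>lam p\<bar> \<le> M"
  shows "is_bdd_op (sandwich lam)"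
  unfolding is_bdd_op_def
  by (intro conjI allI impI exI[of _ M] sandwich_l2(1)[OF _ assms] sandwich_add_scaled
      l2norm_sandwich_le[OF _ assms])

lemma positive_op_sandwich:
  assumes lam: "\<And>p. 0 \<le> lam p" "\<And>p. lam p \<le> M"
  shows "positive_op (sandwich lam)"
  unfolding positive_op_def
proof (intro allI impI)
  fix x assume x: "is_l2 x"
  have lam_abs: "\<bar>lam p\<bar> \<le> M" for p using lam[of p] by auto
  note adj = adj_apply_l2(1)[OF x]
  have s: "summable (\<lambda>p. lam p * (cmod (adj_apply x p))\<^sup>2)"
  proof (rule summable_comparison_test'[where N=0])
    show "summable (\<lambda>p. M * (cmod (adj_apply x p))\<^sup>2)"
      using adj unfolding is_l2_def by (rule summable_mult)
  qed (use lam in \<open>auto intro!: mult_right_mono\<close>)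
  have "l2inner (sandwich lam x) x = (\<Sum>p. complex_of_real (lam p) * adj_apply x p * cnj (adj_apply x p))"
    unfolding l2inner_def sandwich_def
    by (rule mat_apply_adjoint[OF is_l2_scale_real(1)[OF adj lam_abs] x])
  also have "\<dots> = (\<Sum>p. complex_of_real (lam p * (cmod (adj_apply x p))\<^sup>2))"
    by (simp add: mult.assoc complex_norm_square[symmetric])
  also have "\<dots> = complex_of_real (\<Sum>p. lam p * (cmod (adj_apply x p))\<^sup>2)"
    by (rule suminf_of_real[OF s, symmetric])
  finally have "l2inner (sandwich lam x) x = complex_of_real (\<Sum>p. lam p * (cmod (adj_apply x p))\<^sup>2)" .
  moreover have "0 \<le> (\<Sum>p. lam p * (cmod (adj_apply x p))\<^sup>2)"
    by (rule suminf_nonneg[OF s]) (use lam in auto)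
  ultimately show "Im (l2inner (sandwich lam x) x) = 0 \<and> 0 \<le> Re (l2inner (sandwich lam x) x)"
    by simp
qed

lemma op_entry_sandwich:
  "op_entry (sandwich lam) n n = complex_of_real (\<Sum>p<sb n. lam p * (g n p)\<^sup>2)"
proof -
  have "adj_apply (basis_vec n) p = complex_of_real (g n p)" for p
    unfolding adj_apply_def by (subst suminf_finite[of "{n}"]) (auto simp: basis_vec_def)
  then show ?thesis
    unfolding op_entry_def sandwich_def mat_apply_def by (simp add: power2_eq_square mult.assoc)
qed

lemma sandwich_truncate:
  "sandwich (\<lambda>p. if p < k then lam p else 0) x
    = (\<lambda>n. \<Sum>i<k. (complex_of_real (lam i) * adj_apply x i) * complex_of_real (g n i))"
proof
  fix n
  have "sandwich (\<lambda>p. if p < k then lam p else 0) x n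
      = (\<Sum>p<sb n + k. (if p < k then complex_of_real (lam p) * adj_apply x p else 0) * complex_of_real (g n p))"
    unfolding sandwich_def by (subst mat_apply_eq_sum_upto[of n "sb n + k"]) (auto intro!: sum.cong)
  also have "\<dots> = (\<Sum>i<k. (complex_of_real (lam i) * adj_apply x i) * complex_of_real (g n i))"
    by (subst sum.mono_neutral_right[of "{..<sb n + k}" "{..<k}"]) auto
  finally show "sandwich (\<lambda>p. if p < k then lam p else 0) x n
      = (\<Sum>i<k. (complex_of_real (lam i) * adj_apply x i) * complex_of_real (g n i))" .
qed

lemma rank_le_sandwich_truncate: "rank_le (sandwich (\<lambda>p. if p < k then lam p else 0)) k"
  unfolding rank_le_def sandwich_truncate
  by (intro exI[of _ "\<lambda>i n. complex_of_real (g n i)"] conjI allI impI is_l2_col)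
     (rule exI[of _ "\<lambda>i. complex_of_real (lam i) * adj_apply _ i"], simp)

lemma sandwich_diff: "(\<lambda>n. sandwich lam x n - sandwich lam' x n) = sandwich (\<lambda>p. lam p - lam' p) x"
  unfolding sandwich_def mat_apply_def by (simp add: fun_eq_iff algebra_simps sum_subtractf)

text \<open>The rank-\<open>k\<close> truncation of \<open>diag(\<lambda>)\<close> is at distance \<open>\<lambda> k\<close> from \<open>diag(\<lambda>)\<close>, and
  compressing by the contraction \<open>G\<close> preserves this.\<close>

lemma sing_val_sandwich_le:
  assumes nonneg: "\<And>p. 0 \<le> lam p" and antimono: "\<And>i j. i \<le> j \<Longrightarrow> lam j \<le> lam i"
  shows "sing_val k (sandwich lam) \<le> lam k"
proof (rule sing_val_le_approx)
  have bound: "\<bar>lam p\<bar> \<le> lam 0" for p using nonneg[of p] antimono[of 0 p] by simp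
  show "is_bdd_op (sandwich lam)" by (rule is_bdd_op_sandwich[OF bound])
  show "is_bdd_op (sandwich (\<lambda>p. if p < k then lam p else 0))"
    by (rule is_bdd_op_sandwich[where M="lam 0"]) (use bound nonneg in auto)
  show "rank_le (sandwich (\<lambda>p. if p < k then lam p else 0)) k"
    by (rule rank_le_sandwich_truncate)
  fix x assume x: "is_l2 x" and x1: "l2norm x \<le> 1"
  have "\<bar>lam p - (if p < k then lam p else 0)\<bar> \<le> lam k" for p
    using nonneg[of k] nonneg[of p] antimono[of k p] by auto
  then have "l2norm (sandwich (\<lambda>p. lam p - (if p < k then lam p else 0)) x) \<le> lam k * l2norm x"
    by (rule l2norm_sandwich_le[OF x])
  also have "\<dots> \<le> lam k" using x1 nonneg[of k] by (simp add: mult_left_le)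
  finally show "l2norm (\<lambda>n. sandwich lam x n - sandwich (\<lambda>p. if p < k then lam p else 0) x n) \<le> lam k"
    unfolding sandwich_diff .
qed

end

section \<open>Rotations realising a submajorized sequence\<close>

lemma sum_skip_index:
  fixes c :: "nat \<Rightarrow> real"
  shows "(\<Sum>i<m. if i < r then c i else c (Suc i))
    = (if m \<le> r then (\<Sum>i<m. c i) else (\<Sum>i<Suc m. c i) - c r)"
proof (induction m)
  case (Suc m)
  then show ?case by (cases "Suc m \<le> r"; cases "m = r") (auto simp: not_le le_Suc_eq)
qed simp

text \<open>One step of the greedy construction: the largest target \<open>\<beta>\<close> is realised from the residual
  weight \<open>w\<close> and the available weight \<open>c r\<close>, leaving the residual weight \<open>w + c r - \<beta>\<close>; the
  remaining targets stay submajorized by the remaining weights.\<close>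

lemma submaj_skip_index:
  fixes c bs :: "nat \<Rightarrow> real"
  assumes big: "\<And>i. i < r \<Longrightarrow> \<beta> \<le> c i"
    and bs0: "bs 0 = \<beta>" and bs_antimono: "\<And>i. bs (Suc i) \<le> bs i"
    and cr: "c r \<le> \<beta> \<or> (\<forall>i. r < i \<longrightarrow> c i \<le> w)"
    and submaj: "\<And>k. (\<Sum>i<Suc k. bs i) \<le> max (\<Sum>i<Suc k. c i) (w + (\<Sum>i<k. c i))"
  shows "(\<Sum>i<Suc k. bs (Suc i)) \<le> max (\<Sum>i<Suc k. if i < r then c i else c (Suc i))
            (w + c r - \<beta> + (\<Sum>i<k. if i < r then c i else c (Suc i)))"
proof -
  have bs_le: "bs i \<le> \<beta>" for i
    by (induction i) (use bs0 bs_antimono order_trans in auto)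
  have tail: "(\<Sum>i<Suc k. bs (Suc i)) = (\<Sum>i<Suc (Suc k). bs i) - \<beta>"
    using bs0 by (simp only: sum.lessThan_Suc_shift)
  show ?thesis
  proof (cases "Suc k \<le> r")
    case True
    have "(\<Sum>i<Suc k. bs (Suc i)) \<le> (\<Sum>i<Suc k. \<beta>)" by (rule sum_mono) (rule bs_le)
    also have "\<dots> \<le> (\<Sum>i<Suc k. c i)" by (rule sum_mono) (use True big in auto)
    finally show ?thesis using True by (simp add: sum_skip_index)
  next
    case False
    have skip1: "(\<Sum>i<Suc k. if i < r then c i else c (Suc i)) = (\<Sum>i<Suc (Suc k). c i) - c r"
      using False by (simp add: sum_skip_index)
    have skip0: "(\<Sum>i<k. if i < r then c i else c (Suc i)) = (\<Sum>i<Suc k. c i) - c r"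
      using False by (cases "k = r") (simp_all add: sum_skip_index)
    have "c r \<le> \<beta> \<or> (\<Sum>i<Suc (Suc k). c i) \<le> w + (\<Sum>i<Suc k. c i)"
      using cr False by auto
    then show ?thesis using submaj[of "Suc k"] tail skip0 skip1 by (auto simp: max_def split: if_splits)
  qed
qed

text \<open>Cosine and sine of the rotation, in the plane of two orthonormal vectors of weights \<open>w\<close> and
  \<open>al\<close>, that produces a vector of weight \<open>be\<close>; if \<open>w = al\<close> then \<open>be = w\<close> and no rotation is needed.\<close>

definition rot_cos :: "real \<Rightarrow> real \<Rightarrow> real \<Rightarrow> real" where
  "rot_cos w al be = (if w = al then 1 else sqrt ((be - al) / (w - al)))"

definition rot_sin :: "real \<Rightarrow> real \<Rightarrow> real \<Rightarrow> real" where
  "rot_sin w al be = (if w = al then 0 else sqrt ((w - be) / (w - al)))"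

lemma rot_cos_sin:
  assumes "(al \<le> be \<and> be \<le> w) \<or> (w < be \<and> be < al)"
  shows "(rot_cos w al be)\<^sup>2 + (rot_sin w al be)\<^sup>2 = 1"
    "(rot_cos w al be)\<^sup>2 * w + (rot_sin w al be)\<^sup>2 * al = be"
    "(rot_sin w al be)\<^sup>2 * w + (rot_cos w al be)\<^sup>2 * al = w + al - be"
proof -
  define cs sn where "cs = rot_cos w al be" and "sn = rot_sin w al be"
  have "cs\<^sup>2 + sn\<^sup>2 = 1 \<and> cs\<^sup>2 * w + sn\<^sup>2 * al = be \<and> sn\<^sup>2 * w + cs\<^sup>2 * al = w + al - be"
  proof (cases "w = al")
    case True
    with assms have "be = w" by auto
    with True show ?thesis by (simp add: cs_def sn_def rot_cos_def rot_sin_def)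
  next
    case False
    have "0 \<le> (be - al) / (w - al)" "0 \<le> (w - be) / (w - al)"
      using assms False by (auto intro: divide_nonneg_nonneg divide_nonpos_nonpos)
    then have "cs\<^sup>2 = (be - al) / (w - al)" "sn\<^sup>2 = (w - be) / (w - al)"
      using False by (simp_all add: cs_def sn_def rot_cos_def rot_sin_def)
    moreover have "w - al \<noteq> 0" using False by simp
    then have "(be - al) / (w - al) + (w - be) / (w - al) = ((be - al) + (w - be)) / (w - al)"
      "(be - al) / (w - al) * w + (w - be) / (w - al) * al = ((be - al) * w + (w - be) * al) / (w - al)"
      "(w - be) / (w - al) * w + (be - al) / (w - al) * al = ((w - be) * w + (be - al) * al) / (w - al)"
      by (simp_all only: times_divide_eq_left add_divide_distrib)
    moreover have "(be - al) + (w - be) = 1 * (w - al)" "(be - al) * w + (w - be) * al = be * (w - al)"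
      "(w - be) * w + (be - al) * al = (w + al - be) * (w - al)"
      by (simp_all add: algebra_simps)
    ultimately show ?thesis using \<open>w - al \<noteq> 0\<close> by simp
  qed
  then show "cs\<^sup>2 + sn\<^sup>2 = 1" "cs\<^sup>2 * w + sn\<^sup>2 * al = be" "sn\<^sup>2 * w + cs\<^sup>2 * al = w + al - be"
    by auto
qed

definition unit_vec :: "nat \<Rightarrow> nat \<Rightarrow> real" where
  "unit_vec q p = (if p = q then 1 else 0)"

lemma sum_weighted_sq_unit_vec:
  fixes u wt :: "nat \<Rightarrow> real"
  assumes "u q = 0" "q < M"
  shows "(\<Sum>p<M. wt p * (x * u p + y * unit_vec q p)\<^sup>2) = x\<^sup>2 * (\<Sum>p<M. wt p * (u p)\<^sup>2) + y\<^sup>2 * wt q"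
proof -
  have "(\<Sum>p<M. wt p * (x * u p + y * unit_vec q p)\<^sup>2)
      = (\<Sum>p<M. x\<^sup>2 * (wt p * (u p)\<^sup>2) + y\<^sup>2 * (wt p * unit_vec q p))"
    by (rule sum.cong) (use assms in \<open>auto simp: unit_vec_def power2_eq_square algebra_simps\<close>)
  also have "\<dots> = x\<^sup>2 * (\<Sum>p<M. wt p * (u p)\<^sup>2) + y\<^sup>2 * (\<Sum>p<M. wt p * unit_vec q p)"
    by (simp add: sum.distrib sum_distrib_left)
  also have "(\<Sum>p<M. wt p * unit_vec q p) = wt q"
    using assms(2) by (simp add: unit_vec_def if_distrib sum.delta cong: if_cong)
  finally show ?thesis .
qed

text \<open>The state after finitely many steps: the current residual unit vector and its weight, the
  first index never touched, and the list of skipped indices below it, which are still unused.\<close>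

datatype rot_state =
  Rot_State (weight: real) (gaps: "nat list") (fresh: nat) (residual: "nat \<Rightarrow> real")

definition used :: "rot_state \<Rightarrow> nat set" where
  "used s = {p. p < fresh s \<and> p \<notin> set (gaps s)}"

lemma used_less_fresh: "p \<in> used s \<Longrightarrow> p < fresh s"
  unfolding used_def by simp

locale submajorized =
  fixes a b :: "nat \<Rightarrow> real"
  assumes a_antimono: "\<And>i j. i \<le> j \<Longrightarrow> a j \<le> a i" and a_nonneg: "\<And>i. 0 \<le> a i"
    and a_small: "\<And>e. 0 < e \<Longrightarrow> \<exists>q. a q \<le> e"
    and b_antimono: "\<And>i j. i \<le> j \<Longrightarrow> b j \<le> b i" and b_nonneg: "\<And>i. 0 \<le> b i"
    and submaj: "\<And>n. (\<Sum>i<Suc n. b i) \<le> (\<Sum>i<Suc n. a i)"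
begin

text \<open>A rotation partner must have weight on the other side of the target than the residual. The
  feasibility invariant below guarantees that the lightest gap, the last one, qualifies when the
  target exceeds the residual weight.\<close>

definition pivot :: "real \<Rightarrow> rot_state \<Rightarrow> nat" where
  "pivot be s = (if be \<le> weight s then (LEAST q. fresh s \<le> q \<and> a q \<le> be) else last (gaps s))"

definition rot_step :: "real \<Rightarrow> rot_state \<Rightarrow> rot_state" where
  "rot_step be s = (if be \<le> 0 then s else
     Rot_State (weight s + a (pivot be s) - be)
       (if be \<le> weight s then gaps s @ [fresh s..<pivot be s] else butlast (gaps s))
       (if be \<le> weight s then Suc (pivot be s) else fresh s)
       (\<lambda>p. - rot_sin (weight s) (a (pivot be s)) be * residual s p
            + rot_cos (weight s) (a (pivot be s)) be * unit_vec (pivot be s) p))"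

definition rot_col :: "real \<Rightarrow> rot_state \<Rightarrow> nat \<Rightarrow> real" where
  "rot_col be s = (if be \<le> 0 then (\<lambda>p. 0) else
     (\<lambda>p. rot_cos (weight s) (a (pivot be s)) be * residual s p
          + rot_sin (weight s) (a (pivot be s)) be * unit_vec (pivot be s) p))"

primrec state :: "nat \<Rightarrow> rot_state" where
  "state 0 = Rot_State (a 0) [] 1 (unit_vec 0)"
| "state (Suc j) = rot_step (b j) (state j)"

declare state.simps(2) [simp del]

definition col :: "nat \<Rightarrow> nat \<Rightarrow> real" where
  "col j = rot_col (b j) (state j)"

definition pivot_at :: "nat \<Rightarrow> nat" where
  "pivot_at j = pivot (b j) (state j)"

definition cos_at :: "nat \<Rightarrow> real" where
  "cos_at j = rot_cos (weight (state j)) (a (pivot_at j)) (b j)"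

definition sin_at :: "nat \<Rightarrow> real" where
  "sin_at j = rot_sin (weight (state j)) (a (pivot_at j)) (b j)"

text \<open>The weights of the unused indices in decreasing order: first the gaps, then the fresh ones.\<close>

definition avail :: "rot_state \<Rightarrow> nat \<Rightarrow> real" where
  "avail s i = (if i < length (gaps s) then a (gaps s ! i) else a (fresh s + (i - length (gaps s))))"

text \<open>The targets still to be realised are submajorized by the available weights, where the
  residual weight may replace one of them. This is what keeps the greedy choice of pivots possible.\<close>

definition remaining_submaj :: "nat \<Rightarrow> bool" where
  "remaining_submaj j \<longleftrightarrow> (\<forall>k. (\<Sum>i<Suc k. b (j + i))
     \<le> max (\<Sum>i<Suc k. avail (state j) i) (weight (state j) + (\<Sum>i<k. avail (state j) i)))"

definition feasible_inv :: "nat \<Rightarrow> bool" where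
  "feasible_inv j \<longleftrightarrow> (\<forall>g \<in> set (gaps (state j)). b j < a g) \<and> a (fresh (state j)) \<le> weight (state j)
     \<and> distinct (gaps (state j)) \<and> set (gaps (state j)) \<subseteq> {..<fresh (state j)} \<and> remaining_submaj j"

lemma feasible_inv_0: "feasible_inv 0"
proof -
  have "(\<Sum>i<Suc k. a i) = a 0 + (\<Sum>i<k. a (Suc i))" for k
    by (simp only: sum.lessThan_Suc_shift)
  then have "remaining_submaj 0"
    unfolding remaining_submaj_def avail_def using submaj by (simp add: max.coboundedI2)
  then show ?thesis unfolding feasible_inv_def by (simp add: a_antimono)
qed

lemma pivot_forward:
  assumes "0 < be" "be \<le> weight s"
  shows "fresh s \<le> pivot be s" "a (pivot be s) \<le> be"
    "\<And>q. fresh s \<le> q \<Longrightarrow> q < pivot be s \<Longrightarrow> be < a q"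
proof -
  obtain q0 where "a q0 \<le> be" using a_small[OF assms(1)] by blast
  then have ex: "fresh s \<le> max q0 (fresh s) \<and> a (max q0 (fresh s)) \<le> be"
    using a_antimono[of q0 "max q0 (fresh s)"] by auto
  have eq: "pivot be s = (LEAST q. fresh s \<le> q \<and> a q \<le> be)"
    unfolding pivot_def using assms by simp
  show "fresh s \<le> pivot be s" "a (pivot be s) \<le> be"
    unfolding eq using LeastI[of "\<lambda>q. fresh s \<le> q \<and> a q \<le> be", OF ex] by auto
  show "\<And>q. fresh s \<le> q \<Longrightarrow> q < pivot be s \<Longrightarrow> be < a q"
    unfolding eq using not_less_Least by fastforce
qed

lemma pivot_back:
  assumes inv: "feasible_inv j" and pos: "0 < b j" and backward: "\<not> b j \<le> weight (state j)"
  shows "gaps (state j) \<noteq> []" "pivot (b j) (state j) = last (gaps (state j))"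
    "pivot (b j) (state j) \<in> set (gaps (state j))" "b j < a (pivot (b j) (state j))"
proof -
  have "(\<Sum>i<Suc 0. b (j + i)) \<le> max (\<Sum>i<Suc 0. avail (state j) i) (weight (state j) + (\<Sum>i<0. avail (state j) i))"
    using inv unfolding feasible_inv_def remaining_submaj_def by blast
  then show ne: "gaps (state j) \<noteq> []"
    using backward inv unfolding feasible_inv_def avail_def by (auto simp: max_def split: if_splits)
  show q: "pivot (b j) (state j) = last (gaps (state j))" unfolding pivot_def using backward by simp
  show "pivot (b j) (state j) \<in> set (gaps (state j))" unfolding q using ne by simp
  then show "b j < a (pivot (b j) (state j))" using inv unfolding feasible_inv_def by blast
qed

lemma avail_forward:
  assumes "fresh s \<le> q" "gaps s' = gaps s @ [fresh s..<q]" "fresh s' = Suc q"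
  shows "avail s' i = (if i < length (gaps s) + (q - fresh s) then avail s i else avail s (Suc i))"
proof -
  consider "i < length (gaps s)" | "length (gaps s) \<le> i" "i < length (gaps s) + (q - fresh s)"
    | "length (gaps s) + (q - fresh s) \<le> i"
    by linarith
  then show ?thesis
  proof cases
    case 3
    have "avail s' i = a (Suc q + (i - (length (gaps s) + (q - fresh s))))"
      unfolding avail_def using assms 3 by simp
    moreover have "avail s (Suc i) = a (fresh s + (Suc i - length (gaps s)))"
      unfolding avail_def using 3 by simp
    moreover have "Suc q + (i - (length (gaps s) + (q - fresh s))) = fresh s + (Suc i - length (gaps s))"
      using 3 assms(1) by simp
    moreover have "\<not> i < length (gaps s) + (q - fresh s)" using 3 by simp
    ultimately show ?thesis by (simp only: if_False)
  qed (use assms in \<open>auto simp: avail_def nth_append\<close>)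
qed

lemma avail_backward:
  assumes "gaps s \<noteq> []" "gaps s' = butlast (gaps s)" "fresh s' = fresh s"
  shows "avail s' i = (if i < length (gaps s) - 1 then avail s i else avail s (Suc i))"
proof (cases "i < length (gaps s) - 1")
  case True then show ?thesis unfolding avail_def using assms by (auto simp: nth_butlast)
next
  case False
  have "avail s' i = a (fresh s + (i - (length (gaps s) - 1)))"
    unfolding avail_def using assms False by simp
  moreover have "avail s (Suc i) = a (fresh s + (Suc i - length (gaps s)))"
    unfolding avail_def using False assms(1) by (cases "gaps s") auto
  moreover have "i - (length (gaps s) - 1) = Suc i - length (gaps s)"
    using False assms(1) by (cases "gaps s") auto
  ultimately show ?thesis using False by (simp only: if_False)
qed

lemma state_Suc_nonpos: "\<not> 0 < b j \<Longrightarrow> state (Suc j) = state j"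
  by (simp add: state.simps(2) rot_step_def)

lemma state_Suc_forward:
  assumes "0 < b j" "b j \<le> weight (state j)"
  shows "gaps (state (Suc j)) = gaps (state j) @ [fresh (state j)..<pivot_at j]"
    "fresh (state (Suc j)) = Suc (pivot_at j)"
  using assms by (simp_all add: state.simps(2) rot_step_def pivot_at_def)

lemma state_Suc_back:
  assumes "0 < b j" "\<not> b j \<le> weight (state j)"
  shows "gaps (state (Suc j)) = butlast (gaps (state j))" "fresh (state (Suc j)) = fresh (state j)"
  using assms by (simp_all add: state.simps(2) rot_step_def)

lemma weight_state_Suc:
  "0 < b j \<Longrightarrow> weight (state (Suc j)) = weight (state j) + a (pivot_at j) - b j"
  by (simp add: state.simps(2) rot_step_def pivot_at_def)

lemma remaining_submaj_Suc_nonpos: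
  assumes "remaining_submaj j" "\<not> 0 < b j"
  shows "remaining_submaj (Suc j)"
proof -
  have "(\<Sum>i<Suc k. b (Suc j + i)) \<le> (\<Sum>i<Suc k. b (j + i))" for k
    by (rule sum_mono) (rule b_antimono, simp)
  with assms show ?thesis
    unfolding remaining_submaj_def state_Suc_nonpos[OF assms(2)] by (meson order_trans)
qed

lemma remaining_submaj_Suc:
  assumes inv: "remaining_submaj j" and pos: "0 < b j"
    and removed: "\<And>i. avail (state (Suc j)) i = (if i < r then avail (state j) i else avail (state j) (Suc i))"
    and pivot: "avail (state j) r = a (pivot_at j)"
    and big: "\<And>i. i < r \<Longrightarrow> b j \<le> avail (state j) i"
    and cr: "a (pivot_at j) \<le> b j \<or> (\<forall>i. r < i \<longrightarrow> avail (state j) i \<le> weight (state j))"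
  shows "remaining_submaj (Suc j)"
  unfolding remaining_submaj_def
proof
  fix k
  have "(\<Sum>i<Suc k. b (j + Suc i)) \<le> max (\<Sum>i<Suc k. if i < r then avail (state j) i else avail (state j) (Suc i))
      (weight (state j) + avail (state j) r - b j
        + (\<Sum>i<k. if i < r then avail (state j) i else avail (state j) (Suc i)))"
    by (rule submaj_skip_index[where bs="\<lambda>i. b (j + i)"])
       (use big cr pivot inv b_antimono in \<open>auto simp: remaining_submaj_def\<close>)
  then show "(\<Sum>i<Suc k. b (Suc j + i)) \<le> max (\<Sum>i<Suc k. avail (state (Suc j)) i)
      (weight (state (Suc j)) + (\<Sum>i<k. avail (state (Suc j)) i))"
    unfolding removed weight_state_Suc[OF pos] by (simp add: pivot)
qed

lemma feasible_inv_Suc_forward: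
  assumes inv: "feasible_inv j" and pos: "0 < b j" and forward: "b j \<le> weight (state j)"
  shows "feasible_inv (Suc j)"
proof -
  define s q where "s = state j" and "q = pivot_at j"
  have gaps_big: "\<forall>g\<in>set (gaps s). b j < a g" and gaps_less: "set (gaps s) \<subseteq> {..<fresh s}"
    and "distinct (gaps s)" "remaining_submaj j"
    using inv unfolding feasible_inv_def s_def by auto
  have q: "fresh s \<le> q" "a q \<le> b j" "\<And>q'. fresh s \<le> q' \<Longrightarrow> q' < q \<Longrightarrow> b j < a q'"
    using pivot_forward[OF pos forward] unfolding s_def q_def pivot_at_def by auto
  have gaps': "gaps (state (Suc j)) = gaps s @ [fresh s..<q]" and fresh': "fresh (state (Suc j)) = Suc q"
    using state_Suc_forward[OF pos forward] unfolding s_def q_def by auto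
  define r where "r = length (gaps s) + (q - fresh s)"
  have "\<not> r < length (gaps s)" "fresh s + (r - length (gaps s)) = q"
    unfolding r_def using q(1) by simp_all
  then have "avail s r = a q" unfolding avail_def by simp
  moreover have "b j \<le> avail s i" if "i < r" for i
    using that gaps_big q(3)[of "fresh s + (i - length (gaps s))"]
    unfolding avail_def r_def by (auto intro: less_imp_le)
  ultimately have "remaining_submaj (Suc j)"
    using remaining_submaj_Suc[OF \<open>remaining_submaj j\<close> pos, where r=r] q(2)
      avail_forward[OF q(1) gaps' fresh', folded r_def]
    unfolding s_def q_def by blast
  moreover have "b (Suc j) \<le> b j" by (rule b_antimono) simp
  ultimately show ?thesis unfolding feasible_inv_def gaps' fresh'
    using gaps_big gaps_less q \<open>distinct (gaps s)\<close> a_antimono[of q "Suc q"]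
      weight_state_Suc[OF pos] forward
    by (auto simp: s_def q_def intro: le_less_trans)
qed

lemma feasible_inv_Suc_backward:
  assumes inv: "feasible_inv j" and pos: "0 < b j" and backward: "\<not> b j \<le> weight (state j)"
  shows "feasible_inv (Suc j)"
proof -
  define s q where "s = state j" and "q = pivot_at j"
  have gaps_big: "\<forall>g\<in>set (gaps s). b j < a g" and gaps_less: "set (gaps s) \<subseteq> {..<fresh s}"
    and fresh_le: "a (fresh s) \<le> weight s" and "distinct (gaps s)" "remaining_submaj j"
    using inv unfolding feasible_inv_def s_def by auto
  have ne: "gaps s \<noteq> []" and q: "q = last (gaps s)" "b j < a q"
    using pivot_back[OF inv pos backward] unfolding s_def q_def pivot_at_def by auto
  have gaps': "gaps (state (Suc j)) = butlast (gaps s)" and fresh': "fresh (state (Suc j)) = fresh s"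
    using state_Suc_back[OF pos backward] unfolding s_def by auto
  define r where "r = length (gaps s) - 1"
  have "avail s r = a q" unfolding avail_def r_def q using ne by (simp add: last_conv_nth)
  moreover have "b j \<le> avail s i" if "i < r" for i
    using that gaps_big unfolding avail_def r_def by (auto intro: less_imp_le)
  moreover have "avail s i \<le> weight s" if "r < i" for i
  proof -
    have "\<not> i < length (gaps s)" using that unfolding r_def by simp
    then have "avail s i = a (fresh s + (i - length (gaps s)))" unfolding avail_def by simp
    also have "\<dots> \<le> a (fresh s)" by (rule a_antimono) simp
    finally show ?thesis using fresh_le by simp
  qed
  ultimately have "remaining_submaj (Suc j)"
    using remaining_submaj_Suc[OF \<open>remaining_submaj j\<close> pos, where r=r]
      avail_backward[OF ne gaps' fresh', folded r_def]
    unfolding s_def q_def by blast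
  moreover have "b (Suc j) \<le> b j" by (rule b_antimono) simp
  ultimately show ?thesis unfolding feasible_inv_def gaps' fresh'
    using gaps_big gaps_less fresh_le q \<open>distinct (gaps s)\<close> weight_state_Suc[OF pos]
    by (auto simp: s_def q_def distinct_butlast dest: in_set_butlastD intro: le_less_trans)
qed

lemma feasible_inv_holds: "feasible_inv j"
proof (induction j)
  case 0 show ?case by (rule feasible_inv_0)
next
  case (Suc j)
  show ?case
  proof (cases "0 < b j")
    case False
    with Suc.IH show ?thesis unfolding feasible_inv_def state_Suc_nonpos[OF False]
      using remaining_submaj_Suc_nonpos[OF _ False] b_antimono[of j "Suc j"]
      by (auto intro: le_less_trans)
  qed (use Suc.IH feasible_inv_Suc_forward feasible_inv_Suc_backward in blast)
qed

lemma rot_step_used: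
  assumes pos: "0 < b j"
  shows "pivot_at j \<notin> used (state j)" "used (state j) \<subseteq> used (state (Suc j))"
    "pivot_at j \<in> used (state (Suc j))" "fresh (state j) \<le> fresh (state (Suc j))"
proof -
  define s q where "s = state j" and "q = pivot_at j"
  have inv: "feasible_inv j" by (rule feasible_inv_holds)
  then have gaps_less: "set (gaps s) \<subseteq> {..<fresh s}" and "distinct (gaps s)"
    unfolding feasible_inv_def s_def by auto
  have "q \<notin> used s \<and> used s \<subseteq> used (state (Suc j)) \<and> q \<in> used (state (Suc j))
      \<and> fresh s \<le> fresh (state (Suc j))"
  proof (cases "b j \<le> weight s")
    case True
    then have "fresh s \<le> q" using pivot_forward(1)[OF pos] unfolding s_def q_def pivot_at_def by blast
    with True show ?thesis
      using state_Suc_forward[OF pos] gaps_less unfolding used_def s_def q_def by auto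
  next
    case False
    then have ne: "gaps s \<noteq> []" and q: "q = last (gaps s)"
      using pivot_back[OF inv pos] unfolding s_def q_def pivot_at_def by auto
    then have "gaps s = butlast (gaps s) @ [q]" by simp
    then have "q \<notin> set (butlast (gaps s))"
      using \<open>distinct (gaps s)\<close> by (metis distinct_append disjoint_iff list.set_intros(1))
    moreover have "q < fresh s" using ne q gaps_less last_in_set by blast
    ultimately show ?thesis
      using False ne q state_Suc_back[OF pos] gaps_less unfolding used_def s_def
      by (auto dest: in_set_butlastD)
  qed
  then show "pivot_at j \<notin> used (state j)" "used (state j) \<subseteq> used (state (Suc j))"
    "pivot_at j \<in> used (state (Suc j))" "fresh (state j) \<le> fresh (state (Suc j))"
    unfolding s_def q_def by auto
qed

lemma rot_step_vectors:
  assumes "0 < b j"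
  shows "residual (state (Suc j)) = (\<lambda>p. - sin_at j * residual (state j) p + cos_at j * unit_vec (pivot_at j) p)"
    "col j = (\<lambda>p. cos_at j * residual (state j) p + sin_at j * unit_vec (pivot_at j) p)"
  using assms
  by (simp_all add: state.simps(2) rot_step_def col_def rot_col_def cos_at_def sin_at_def pivot_at_def)

lemma rot_step_weights:
  assumes pos: "0 < b j"
  shows "(cos_at j)\<^sup>2 + (sin_at j)\<^sup>2 = 1"
    "(cos_at j)\<^sup>2 * weight (state j) + (sin_at j)\<^sup>2 * a (pivot_at j) = b j"
    "(sin_at j)\<^sup>2 * weight (state j) + (cos_at j)\<^sup>2 * a (pivot_at j) = weight (state (Suc j))"
proof -
  have "(a (pivot_at j) \<le> b j \<and> b j \<le> weight (state j)) \<or> (weight (state j) < b j \<and> b j < a (pivot_at j))"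
    using pivot_forward(2)[OF pos] pivot_back(4)[OF feasible_inv_holds pos] unfolding pivot_at_def by force
  from rot_cos_sin[OF this] show "(cos_at j)\<^sup>2 + (sin_at j)\<^sup>2 = 1"
    "(cos_at j)\<^sup>2 * weight (state j) + (sin_at j)\<^sup>2 * a (pivot_at j) = b j"
    "(sin_at j)\<^sup>2 * weight (state j) + (cos_at j)\<^sup>2 * a (pivot_at j) = weight (state (Suc j))"
    unfolding cos_at_def sin_at_def weight_state_Suc[OF pos] by simp_all
qed

lemma col_nonpos: "\<not> 0 < b j \<Longrightarrow> col j = (\<lambda>p. 0)"
  unfolding col_def rot_col_def by simp

text \<open>Orthonormality of the nonzero columns and the residual is phrased as a Parseval identity for
  their finite combinations.\<close>

definition frame_inv :: "nat \<Rightarrow> bool" where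
  "frame_inv j \<longleftrightarrow> (\<forall>p. residual (state j) p \<noteq> 0 \<longrightarrow> p \<in> used (state j)) \<and>
     (\<forall>i<j. \<forall>p. col i p \<noteq> 0 \<longrightarrow> p \<in> used (state j)) \<and>
     (\<forall>M \<ge> fresh (state j). (\<Sum>p<M. a p * (residual (state j) p)\<^sup>2) = weight (state j)) \<and>
     (\<forall>M \<ge> fresh (state j). \<forall>c t. (\<Sum>p<M. ((\<Sum>i<j. c i * col i p) + t * residual (state j) p)\<^sup>2)
          = (\<Sum>i<j. if 0 < b i then (c i)\<^sup>2 else 0) + t\<^sup>2)"

lemma frame_inv_0: "frame_inv 0"
proof -
  have "(\<Sum>p<M. a p * (unit_vec 0 p)\<^sup>2) = a 0" if "1 \<le> M" for M
    using sum_weighted_sq_unit_vec[of "\<lambda>_. 0" 0 M a 0 1] that by simp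
  moreover have "(\<Sum>p<M. (t * unit_vec 0 p)\<^sup>2) = t\<^sup>2" if "1 \<le> M" for M t
    using sum_weighted_sq_unit_vec[of "\<lambda>_. 0" 0 M "\<lambda>_. 1" 0 t] that by simp
  ultimately show ?thesis unfolding frame_inv_def used_def by (auto simp: unit_vec_def)
qed

lemma parseval_Suc:
  assumes pos: "0 < b j" and M: "fresh (state (Suc j)) \<le> M"
    and parseval: "\<And>c t. (\<Sum>p<M. ((\<Sum>i<j. c i * col i p) + t * residual (state j) p)\<^sup>2)
      = (\<Sum>i<j. if 0 < b i then (c i)\<^sup>2 else 0) + t\<^sup>2"
    and residual_q: "residual (state j) (pivot_at j) = 0"
    and col_q: "\<And>i. i < j \<Longrightarrow> col i (pivot_at j) = 0"
  shows "(\<Sum>p<M. ((\<Sum>i<Suc j. c i * col i p) + t * residual (state (Suc j)) p)\<^sup>2)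
    = (\<Sum>i<Suc j. if 0 < b i then (c i)\<^sup>2 else 0) + t\<^sup>2"
proof -
  define t' ga where "t' = c j * cos_at j - t * sin_at j" and "ga = c j * sin_at j + t * cos_at j"
  define u where "u p = (\<Sum>i<j. c i * col i p) + t' * residual (state j) p" for p
  have "(\<Sum>i<Suc j. c i * col i p) + t * residual (state (Suc j)) p = 1 * u p + ga * unit_vec (pivot_at j) p" for p
    unfolding u_def t'_def ga_def rot_step_vectors(1)[OF pos]
    by (simp add: algebra_simps rot_step_vectors(2)[OF pos])
  then have "(\<Sum>p<M. ((\<Sum>i<Suc j. c i * col i p) + t * residual (state (Suc j)) p)\<^sup>2)
      = (\<Sum>p<M. 1 * (1 * u p + ga * unit_vec (pivot_at j) p)\<^sup>2)" by simp
  also have "\<dots> = (\<Sum>p<M. 1 * (u p)\<^sup>2) + ga\<^sup>2"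
    using sum_weighted_sq_unit_vec[of u "pivot_at j" M "\<lambda>_. 1" 1 ga] residual_q col_q M
      used_less_fresh[OF rot_step_used(3)[OF pos]]
    by (simp add: u_def)
  also have "\<dots> = (\<Sum>i<j. if 0 < b i then (c i)\<^sup>2 else 0) + (t'\<^sup>2 + ga\<^sup>2)"
    unfolding u_def using parseval by simp
  also have "t'\<^sup>2 + ga\<^sup>2 = ((cos_at j)\<^sup>2 + (sin_at j)\<^sup>2) * ((c j)\<^sup>2 + t\<^sup>2)"
    unfolding t'_def ga_def by (simp add: power2_eq_square algebra_simps)
  finally show ?thesis using rot_step_weights(1)[OF pos] pos by simp
qed

lemma frame_inv_Suc_nonpos:
  assumes "frame_inv j" "\<not> 0 < b j"
  shows "frame_inv (Suc j)"
  using assms unfolding frame_inv_def state_Suc_nonpos[OF assms(2)] by (auto simp: col_nonpos less_Suc_eq)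

lemma frame_inv_Suc:
  assumes inv: "frame_inv j" and pos: "0 < b j"
  shows "frame_inv (Suc j)"
proof -
  define s q where "s = state j" and "q = pivot_at j"
  note used = rot_step_used[OF pos, folded s_def q_def]
  have residual_used: "\<And>p. residual s p \<noteq> 0 \<Longrightarrow> p \<in> used s"
    and col_used: "\<And>i p. i < j \<Longrightarrow> col i p \<noteq> 0 \<Longrightarrow> p \<in> used s"
    and weight: "\<And>M. fresh s \<le> M \<Longrightarrow> (\<Sum>p<M. a p * (residual s p)\<^sup>2) = weight s"
    and parseval: "\<And>M c t. fresh s \<le> M \<Longrightarrow> (\<Sum>p<M. ((\<Sum>i<j. c i * col i p) + t * residual s p)\<^sup>2)
          = (\<Sum>i<j. if 0 < b i then (c i)\<^sup>2 else 0) + t\<^sup>2"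
    using inv unfolding frame_inv_def s_def by auto
  have residual_q: "residual s q = 0" using residual_used used(1) by blast
  have col_q: "col i q = 0" if "i < j" for i using col_used[OF that] used(1) by blast
  have q_less: "q < fresh (state (Suc j))" using used(3) by (rule used_less_fresh)
  have supp: "p \<in> used (state (Suc j))" if "residual s p \<noteq> 0 \<or> p = q" for p
    using that residual_used used(2,3) by blast
  show ?thesis unfolding frame_inv_def
  proof (intro conjI allI impI)
    fix p assume "residual (state (Suc j)) p \<noteq> 0"
    then show "p \<in> used (state (Suc j))"
      by (intro supp) (auto simp: rot_step_vectors[OF pos] s_def q_def unit_vec_def split: if_splits)
  next
    fix i p assume "i < Suc j" and "col i p \<noteq> 0"
    then show "p \<in> used (state (Suc j))"
      using col_used used(2) supp
      by (cases "i = j") (auto simp: rot_step_vectors[OF pos] s_def q_def unit_vec_def less_Suc_eq split: if_splits)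
  next
    fix M assume M: "fresh (state (Suc j)) \<le> M"
    then show "(\<Sum>p<M. a p * (residual (state (Suc j)) p)\<^sup>2) = weight (state (Suc j))"
      using sum_weighted_sq_unit_vec[of "residual s" q M a "- sin_at j" "cos_at j"]
        residual_q q_less weight[of M] used(4) rot_step_weights(3)[OF pos]
      unfolding rot_step_vectors[OF pos] s_def q_def by simp
  next
    fix M c t assume M: "fresh (state (Suc j)) \<le> M"
    show "(\<Sum>p<M. ((\<Sum>i<Suc j. c i * col i p) + t * residual (state (Suc j)) p)\<^sup>2)
        = (\<Sum>i<Suc j. if 0 < b i then (c i)\<^sup>2 else 0) + t\<^sup>2"
      by (rule parseval_Suc[OF pos M]) (use parseval used(4) M residual_q col_q in \<open>auto simp: s_def q_def\<close>)
  qed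
qed

lemma frame_inv_holds: "frame_inv j"
proof (induction j)
  case (Suc j)
  then show ?case using frame_inv_Suc frame_inv_Suc_nonpos by blast
qed (rule frame_inv_0)

lemma col_weight: "(\<Sum>p<fresh (state (Suc j)). a p * (col j p)\<^sup>2) = b j"
proof (cases "0 < b j")
  case False
  then show ?thesis using b_nonneg[of j] by (simp add: col_nonpos)
next
  case pos: True
  have "residual (state j) (pivot_at j) = 0"
    using frame_inv_holds[of j] rot_step_used(1)[OF pos] unfolding frame_inv_def by blast
  moreover have "(\<Sum>p<fresh (state (Suc j)). a p * (residual (state j) p)\<^sup>2) = weight (state j)"
    using frame_inv_holds[of j] rot_step_used(4)[OF pos] unfolding frame_inv_def by auto
  ultimately show ?thesis
    unfolding rot_step_vectors(2)[OF pos]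
    using sum_weighted_sq_unit_vec[of "residual (state j)" "pivot_at j" "fresh (state (Suc j))" a
        "cos_at j" "sin_at j"]
      used_less_fresh[OF rot_step_used(3)[OF pos]] rot_step_weights(2)[OF pos]
    by simp
qed

lemma col_support:
  assumes "fresh (state (Suc j)) \<le> p"
  shows "col j p = 0"
proof (rule ccontr)
  assume "col j p \<noteq> 0"
  with frame_inv_holds[of "Suc j"] have "p \<in> used (state (Suc j))" unfolding frame_inv_def by blast
  with assms show False using used_less_fresh not_le by blast
qed

lemma col_bessel:
  assumes N: "finite N"
  shows "(\<Sum>p<M. (\<Sum>n\<in>N. c n * col n p)\<^sup>2) \<le> (\<Sum>n\<in>N. (c n)\<^sup>2)"
proof -
  define J where "J = Suc (Max (insert 0 N))"
  have N_less: "N \<subseteq> {..<J}" unfolding J_def using N by (auto simp: le_imp_less_Suc)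
  define c' where "c' i = (if i \<in> N then c i else 0)" for i
  have extend: "(\<Sum>n\<in>N. c n * col n p) = (\<Sum>i<J. c' i * col i p)" for p
    unfolding c'_def by (rule sum.mono_neutral_cong_left) (use N_less in auto)
  define M' where "M' = max M (fresh (state J))"
  have "(\<Sum>p<M. (\<Sum>n\<in>N. c n * col n p)\<^sup>2) \<le> (\<Sum>p<M'. (\<Sum>i<J. c' i * col i p)\<^sup>2)"
    unfolding M'_def extend by (rule sum_mono2) auto
  also have "\<dots> = (\<Sum>i<J. if 0 < b i then (c' i)\<^sup>2 else 0)"
  proof -
    have "fresh (state J) \<le> M'" unfolding M'_def by simp
    with frame_inv_holds[of J] have "(\<Sum>p<M'. ((\<Sum>i<J. c' i * col i p) + 0 * residual (state J) p)\<^sup>2)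
        = (\<Sum>i<J. if 0 < b i then (c' i)\<^sup>2 else 0) + 0\<^sup>2"
      unfolding frame_inv_def by blast
    then show ?thesis by simp
  qed
  also have "\<dots> \<le> (\<Sum>i<J. (c' i)\<^sup>2)" by (rule sum_mono) simp
  also have "\<dots> = (\<Sum>n\<in>N. (c n)\<^sup>2)"
    unfolding c'_def by (rule sum.mono_neutral_cong_right) (use N_less in auto)
  finally show ?thesis .
qed

lemma row_contraction_reindex:
  assumes "inj \<sigma>"
  shows "row_contraction (\<lambda>n p. if n \<in> range \<sigma> then col (inv \<sigma> n) p else 0)
    (\<lambda>n. if n \<in> range \<sigma> then fresh (state (Suc (inv \<sigma> n))) else 0)"
proof
  fix n p
  assume "(if n \<in> range \<sigma> then fresh (state (Suc (inv \<sigma> n))) else 0) \<le> p"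
  then show "(if n \<in> range \<sigma> then col (inv \<sigma> n) p else 0) = 0"
    by (auto intro: col_support)
next
  fix N :: "nat set" and c :: "nat \<Rightarrow> real" and M
  assume N: "finite N"
  define J where "J = \<sigma> -` N"
  have J: "finite J" unfolding J_def using N assms by (intro finite_vimageI) auto
  have img: "\<sigma> ` J = N \<inter> range \<sigma>" unfolding J_def by auto
  have inj_J: "inj_on \<sigma> J" using assms by (rule inj_on_subset) simp
  have reindex: "(\<Sum>n\<in>N. c n * (if n \<in> range \<sigma> then col (inv \<sigma> n) p else 0)) = (\<Sum>j\<in>J. c (\<sigma> j) * col j p)" for p
  proof -
    have "(\<Sum>n\<in>N. c n * (if n \<in> range \<sigma> then col (inv \<sigma> n) p else 0))
        = (\<Sum>n\<in>\<sigma> ` J. c n * col (inv \<sigma> n) p)"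
      unfolding img by (rule sum.mono_neutral_cong_right) (use N in auto)
    also have "\<dots> = (\<Sum>j\<in>J. c (\<sigma> j) * col j p)"
      by (simp add: sum.reindex[OF inj_J] inv_f_f[OF assms])
    finally show ?thesis .
  qed
  have "(\<Sum>p<M. (\<Sum>j\<in>J. c (\<sigma> j) * col j p)\<^sup>2) \<le> (\<Sum>j\<in>J. (c (\<sigma> j))\<^sup>2)"
    by (rule col_bessel[OF J])
  also have "\<dots> = (\<Sum>n\<in>\<sigma> ` J. (c n)\<^sup>2)" by (simp add: sum.reindex[OF inj_J])
  also have "\<dots> \<le> (\<Sum>n\<in>N. (c n)\<^sup>2)" by (rule sum_mono2[OF N]) (auto simp: img)
  finally show "(\<Sum>p<M. (\<Sum>n\<in>N. c n * (if n \<in> range \<sigma> then col (inv \<sigma> n) p else 0))\<^sup>2)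
      \<le> (\<Sum>n\<in>N. (c n)\<^sup>2)"
    unfolding reindex .
qed

end

section \<open>Decreasing rearrangement\<close>

lemma finite_ge_of_tendsto_zero:
  fixes x :: "nat \<Rightarrow> real"
  assumes "x \<longlonglongrightarrow> 0" and "0 < e"
  shows "finite {k. e \<le> x k}"
proof -
  obtain N where N: "\<And>k. N \<le> k \<Longrightarrow> norm (x k - 0) < e"
    using LIMSEQ_D[OF assms] by blast
  have "{k. e \<le> x k} \<subseteq> {..<N}" using N by (force simp: not_less[symmetric])
  then show ?thesis by (rule finite_subset) simp
qed

definition drearr_set :: "(nat \<Rightarrow> real) \<Rightarrow> nat \<Rightarrow> real set" where
  "drearr_set x n = {t. 0 \<le> t \<and> finite {k. x k > t} \<and> card {k. x k > t} \<le> n}"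

lemma drearr_eq_Inf: "drearr x n = Inf (drearr_set x n)"
  unfolding drearr_def drearr_set_def by simp

lemma drearr_set_nonempty:
  fixes x :: "nat \<Rightarrow> real"
  assumes "x \<longlonglongrightarrow> 0"
  shows "drearr_set x n \<noteq> {}"
proof -
  obtain K where K: "0 < K" "\<And>k. norm (x k) \<le> K"
    using convergent_imp_Bseq[OF convergentI[OF assms]] unfolding Bseq_def by blast
  then have "{k. x k > K} = {}" by (auto simp: abs_le_iff not_less)
  then have "K \<in> drearr_set x n" unfolding drearr_set_def using K(1) by simp
  then show ?thesis by blast
qed

lemma bdd_below_drearr_set: "bdd_below (drearr_set x n)"
  unfolding drearr_set_def by (rule bdd_belowI[of _ 0]) auto

lemma drearr_nonneg: "x \<longlonglongrightarrow> 0 \<Longrightarrow> 0 \<le> drearr x n"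
  unfolding drearr_eq_Inf by (rule cInf_greatest[OF drearr_set_nonempty]) (auto simp: drearr_set_def)

lemma drearr_antimono: "x \<longlonglongrightarrow> 0 \<Longrightarrow> n \<le> m \<Longrightarrow> drearr x m \<le> drearr x n"
  unfolding drearr_eq_Inf
  by (rule cInf_superset_mono[OF drearr_set_nonempty bdd_below_drearr_set]) (auto simp: drearr_set_def)

lemma ex_drearr_le:
  assumes "x \<longlonglongrightarrow> 0" and "0 < e"
  shows "\<exists>q. drearr x q \<le> e"
proof -
  have "finite {k. x k > e}"
    using finite_ge_of_tendsto_zero[OF assms] by (rule finite_subset[rotated]) auto
  then have "e \<in> drearr_set x (card {k. x k > e})" unfolding drearr_set_def using assms(2) by simp
  then have "drearr x (card {k. x k > e}) \<le> e"
    unfolding drearr_eq_Inf by (rule cInf_lower[OF _ bdd_below_drearr_set])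
  then show ?thesis by blast
qed

lemma sum_le_sum_drearr:
  fixes y :: "nat \<Rightarrow> real"
  assumes y: "y \<longlonglongrightarrow> 0" and "finite S" "card S = n"
  shows "(\<Sum>s\<in>S. y s) \<le> (\<Sum>k<n. drearr y k)"
  using assms(2,3)
proof (induction n arbitrary: S)
  case (Suc n)
  have "S \<noteq> {}" using Suc.prems by auto
  have "Min (y ` S) \<in> y ` S" using Suc.prems \<open>S \<noteq> {}\<close> by (intro Min_in) auto
  then obtain m where m: "m \<in> S" "y m = Min (y ` S)" by auto
  then have m_min: "y m \<le> y s" if "s \<in> S" for s using Suc.prems that by simp
  have "(\<Sum>s\<in>S - {m}. y s) \<le> (\<Sum>k<n. drearr y k)"
    using Suc.IH[of "S - {m}"] Suc.prems m(1) by simp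
  moreover have "y m \<le> drearr y n"
    unfolding drearr_eq_Inf
  proof (rule cInf_greatest[OF drearr_set_nonempty[OF y]])
    fix t assume t: "t \<in> drearr_set y n"
    show "y m \<le> t"
    proof (rule ccontr)
      assume "\<not> y m \<le> t"
      then have "S \<subseteq> {k. y k > t}" using m_min by fastforce
      then have "card S \<le> card {k. y k > t}" using t unfolding drearr_set_def by (intro card_mono) auto
      then show False using t Suc.prems unfolding drearr_set_def by simp
    qed
  qed
  ultimately show ?case using sum.remove[OF \<open>finite S\<close> m(1), of y] by simp
qed simp

definition argmax_outside :: "(nat \<Rightarrow> real) \<Rightarrow> nat set \<Rightarrow> nat" where
  "argmax_outside y U = (SOME i. i \<notin> U \<and> (\<forall>i'. i' \<notin> U \<longrightarrow> y i' \<le> y i))"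

lemma ex_argmax_outside:
  fixes y :: "nat \<Rightarrow> real"
  assumes y: "y \<longlonglongrightarrow> 0" and y_nonneg: "\<And>k. 0 \<le> y k" and U: "finite U"
  shows "\<exists>i. i \<notin> U \<and> (\<forall>i'. i' \<notin> U \<longrightarrow> y i' \<le> y i)"
proof (cases "\<exists>i0. i0 \<notin> U \<and> 0 < y i0")
  case True
  then obtain i0 where i0: "i0 \<notin> U" "0 < y i0" by blast
  define A where "A = {i. i \<notin> U \<and> y i0 \<le> y i}"
  have A: "finite A" "A \<noteq> {}"
    unfolding A_def using i0 by (auto intro: finite_subset[OF _ finite_ge_of_tendsto_zero[OF y i0(2)]])
  have "Max (y ` A) \<in> y ` A" using A by (intro Max_in) auto
  then obtain m where m: "m \<in> A" "y m = Max (y ` A)" by auto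
  have "y i' \<le> y m" if "i' \<notin> U" for i'
  proof (cases "y i0 \<le> y i'")
    case True
    then show ?thesis unfolding m(2) using that A by (intro Max_ge) (auto simp: A_def)
  qed (use m(1) in \<open>auto simp: A_def\<close>)
  then show ?thesis using m(1) unfolding A_def by blast
next
  case False
  obtain i where "i \<notin> U" using U by (meson ex_new_if_finite infinite_UNIV_nat)
  then show ?thesis using False y_nonneg by (meson not_le order_trans)
qed

primrec dec_enum_list :: "(nat \<Rightarrow> real) \<Rightarrow> nat \<Rightarrow> nat list" where
  "dec_enum_list y 0 = []"
| "dec_enum_list y (Suc j) = dec_enum_list y j @ [argmax_outside y (set (dec_enum_list y j))]"

definition dec_enum :: "(nat \<Rightarrow> real) \<Rightarrow> nat \<Rightarrow> nat" where
  "dec_enum y j = argmax_outside y (set (dec_enum_list y j))"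

lemma set_dec_enum_list: "set (dec_enum_list y j) = dec_enum y ` {..<j}"
  by (induction j) (auto simp: dec_enum_def lessThan_Suc)

context
  fixes y :: "nat \<Rightarrow> real"
  assumes y: "y \<longlonglongrightarrow> 0" and y_nonneg: "\<And>k. 0 \<le> y k"
begin

lemma dec_enum_max:
  "dec_enum y j \<notin> dec_enum y ` {..<j} \<and> (\<forall>i. i \<notin> dec_enum y ` {..<j} \<longrightarrow> y i \<le> y (dec_enum y j))"
proof -
  have "\<exists>i. i \<notin> set (dec_enum_list y j) \<and> (\<forall>i'. i' \<notin> set (dec_enum_list y j) \<longrightarrow> y i' \<le> y i)"
    by (rule ex_argmax_outside[OF y y_nonneg]) simp
  then have "dec_enum y j \<notin> set (dec_enum_list y j)
      \<and> (\<forall>i. i \<notin> set (dec_enum_list y j) \<longrightarrow> y i \<le> y (dec_enum y j))"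
    unfolding dec_enum_def argmax_outside_def by (rule someI_ex)
  then show ?thesis unfolding set_dec_enum_list .
qed

lemma inj_dec_enum: "inj (dec_enum y)"
proof (rule injI)
  fix i j assume eq: "dec_enum y i = dec_enum y j"
  show "i = j"
  proof (rule ccontr)
    assume "i \<noteq> j"
    then have "dec_enum y i \<in> dec_enum y ` {..<j} \<or> dec_enum y j \<in> dec_enum y ` {..<i}"
      by (cases "i < j") auto
    then show False using dec_enum_max[of i] dec_enum_max[of j] eq by auto
  qed
qed

lemma dec_enum_antimono: "i \<le> j \<Longrightarrow> y (dec_enum y j) \<le> y (dec_enum y i)"
proof (induction j rule: dec_induct)
  case (step j)
  have "dec_enum y (Suc j) \<notin> dec_enum y ` {..<j}"
    using dec_enum_max[of "Suc j"] by auto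
  then show ?case using dec_enum_max[of j] step.IH by fastforce
qed simp

lemma dec_enum_covers: "0 < y n \<Longrightarrow> n \<in> range (dec_enum y)"
proof (rule ccontr)
  assume pos: "0 < y n" and "n \<notin> range (dec_enum y)"
  then have "range (dec_enum y) \<subseteq> {k. y n \<le> y k}" using dec_enum_max by blast
  then have "finite (range (dec_enum y))"
    by (rule finite_subset[OF _ finite_ge_of_tendsto_zero[OF y pos]])
  then show False using inj_dec_enum finite_imageD infinite_UNIV_nat by blast
qed

lemma sum_dec_enum_le:
  "(\<Sum>i<Suc n. y (dec_enum y i)) \<le> (\<Sum>k<Suc n. drearr y k)"
proof -
  have "(\<Sum>i<Suc n. y (dec_enum y i)) = (\<Sum>s\<in>dec_enum y ` {..<Suc n}. y s)"
    by (simp add: sum.reindex inj_on_subset[OF inj_dec_enum])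
  also have "\<dots> \<le> (\<Sum>k<Suc n. drearr y k)"
    by (rule sum_le_sum_drearr[OF y]) (auto simp: card_image inj_on_subset[OF inj_dec_enum])
  finally show ?thesis .
qed

end

section \<open>Prescribed diagonals\<close>

lemma row_contraction_with_diagonal:
  fixes a y :: "nat \<Rightarrow> real"
  assumes a_antimono: "\<And>i j. i \<le> j \<Longrightarrow> a j \<le> a i" and a_nonneg: "\<And>i. 0 \<le> a i"
    and a_small: "\<And>e. 0 < e \<Longrightarrow> \<exists>q. a q \<le> e"
    and y: "y \<longlonglongrightarrow> 0" and y_nonneg: "\<And>k. 0 \<le> y k"
    and submaj: "\<And>n. (\<Sum>k<Suc n. drearr y k) \<le> (\<Sum>k<Suc n. a k)"
  obtains g sb where "row_contraction g sb" "\<And>n. (\<Sum>p<sb n. a p * (g n p)\<^sup>2) = y n"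
proof -
  define \<sigma> where "\<sigma> = dec_enum y"
  have inj: "inj \<sigma>" unfolding \<sigma>_def by (rule inj_dec_enum[OF y y_nonneg])
  interpret submajorized a "\<lambda>j. y (\<sigma> j)"
  proof
    show "(\<Sum>i<Suc n. y (\<sigma> i)) \<le> (\<Sum>i<Suc n. a i)" for n
      unfolding \<sigma>_def using sum_dec_enum_le[OF y y_nonneg, of n] submaj[of n] by linarith
  qed (use a_antimono a_nonneg a_small y_nonneg dec_enum_antimono[OF y y_nonneg] in \<open>auto simp: \<sigma>_def\<close>)
  define g where "g n p = (if n \<in> range \<sigma> then col (inv \<sigma> n) p else 0)" for n p
  define sb where "sb n = (if n \<in> range \<sigma> then fresh (state (Suc (inv \<sigma> n))) else 0)" for n
  have "row_contraction g sb"
    unfolding g_def[abs_def] sb_def[abs_def] by (rule row_contraction_reindex[OF inj])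
  moreover have "(\<Sum>p<sb n. a p * (g n p)\<^sup>2) = y n" for n
  proof (cases "n \<in> range \<sigma>")
    case True
    then show ?thesis using col_weight[of "inv \<sigma> n"]
      by (simp add: g_def sb_def f_inv_into_f)
  next
    case False
    then have "y n = 0" using dec_enum_covers[OF y y_nonneg, of n] y_nonneg[of n] unfolding \<sigma>_def by force
    with False show ?thesis by (simp add: g_def sb_def)
  qed
  ultimately show ?thesis by (rule that)
qed

theorem lemma4p2:
  fixes x y :: "nat \<Rightarrow> real"
  assumes "x \<longlonglongrightarrow> 0" and "y \<longlonglongrightarrow> 0"
    and "\<forall>k. 0 \<le> x k" and "\<forall>k. 0 \<le> y k"
    and "submaj y x"
  shows "\<exists>V. is_bdd_op V \<and> positive_op V \<and>
             (\<forall>j. op_entry V j j = complex_of_real (y j)) \<and>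
             (\<forall>k. sing_val k V \<le> drearr x k)"
proof -
  define a where "a = drearr x"
  have a_antimono: "\<And>i j. i \<le> j \<Longrightarrow> a j \<le> a i" and a_nonneg: "\<And>i. 0 \<le> a i"
    unfolding a_def using drearr_antimono drearr_nonneg assms(1) by auto
  have "\<exists>q. a q \<le> e" if "0 < e" for e
    unfolding a_def using ex_drearr_le[OF assms(1) that] .
  moreover have "(\<Sum>k<Suc n. drearr y k) \<le> (\<Sum>k<Suc n. a k)" for n
    using assms(5) unfolding submaj_def a_def by (simp add: lessThan_Suc_atMost)
  ultimately obtain g sb where "row_contraction g sb" and diag: "\<And>n. (\<Sum>p<sb n. a p * (g n p)\<^sup>2) = y n"
    using row_contraction_with_diagonal[of a y, OF a_antimono a_nonneg _ assms(2)] assms(4) by blast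
  interpret row_contraction g sb by fact
  have bound: "\<bar>a p\<bar> \<le> a 0" for p using a_nonneg[of p] a_antimono[of 0 p] by simp
  have "is_bdd_op (sandwich a)" by (rule is_bdd_op_sandwich[OF bound])
  moreover have "positive_op (sandwich a)"
    by (rule positive_op_sandwich[of a "a 0"]) (use a_nonneg bound in auto)
  moreover have "op_entry (sandwich a) j j = complex_of_real (y j)" for j
    by (simp add: op_entry_sandwich diag)
  moreover have "sing_val k (sandwich a) \<le> drearr x k" for k
    using sing_val_sandwich_le[OF a_nonneg a_antimono] unfolding a_def .
  ultimately show ?thesis by blast
qed

end
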